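(* Let $d\ge 1$ and $m\in\mathbb{N}$. Let $\mathcal{A}$ be the adjacency matrix of $\mathbb{Z}^d$ acting on $\ell^2(\mathbb{Z}^d)$, i.e. $(\mathcal{A}\psi)(n)=\sum_{j=1}^d\bigl(\psi(n-\mathfrak{e}_j)+\psi(n+\mathfrak{e}_j)\bigr)$, where $\{\mathfrak{e}_j\}$ is the standard basis of $\mathbb{Z}^d$. For $k\ge 1$ define the $k$-step adjacency operator $(S_k\psi)(n)=\sum_{j=1}^d\bigl(\psi(n-k\mathfrak{e}_j)+\psi(n+k\mathfrak{e}_j)\bigr)$. For $\psi\in\ell^2(\mathbb{Z}^d)$ let $n^m\psi\colon\mathbb{Z}^d\to\mathbb{C}^d$, $n^m\psi(n)=(n_1^m\psi(n),\dots,n_d^m\psi(n))$, with $\|n^m\psi\|^2=\sum_{n}\sum_{j=1}^d |n_j|^{2m}|\psi(n)|^2$. Then for every $\psi\in\ell^2(\mathbb{Z}^d)$ with $\|n^m\psi\|<\infty$, $$\lim_{t\to+\infty}\frac{\|n^m e^{\mathrm{i}t\mathcal{A}}\psi\|^2}{t^{2m}}=d\binom{2m}{m}\|\psi\|^2+\sum_{q=0}^{m-1}\binom{2m}{q}(-1)^{q+m}\langle\psi,S_{2m-2q}\psi\rangle .$$ Moreover, this limit is strictly positive if $\psi\neq 0$, and it is at most $4^m d\|\psi\|^2$.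
   Context: $\langle\phi,\psi\rangle=\sum_{n\in\mathbb{Z}^d}\overline{\phi(n)}\psi(n)$. *)

theory Defs
  imports "HOL-Analysis.Analysis"
begin

text \<open>Lattice Z^d is modelled as the type int^'d, with d = CARD('d) >= 1.
  Functions psi :: int^'d => complex.\<close>

definition adjZ :: "(int^'d \<Rightarrow> complex) \<Rightarrow> (int^'d \<Rightarrow> complex)" where
  "adjZ \<psi> n = (\<Sum>j\<in>UNIV. \<psi> (n - axis j 1) + \<psi> (n + axis j 1))"

definition stepS :: "nat \<Rightarrow> (int^'d \<Rightarrow> complex) \<Rightarrow> (int^'d \<Rightarrow> complex)" where
  "stepS k \<psi> n = (\<Sum>j\<in>UNIV. \<psi> (n - axis j (int k)) + \<psi> (n + axis j (int k)))"

text \<open>e^{itA} psi, defined pointwise by the exponential series (A is bounded,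
  so the l^2-convergent series also converges pointwise to the same limit).\<close>
definition evolZ :: "real \<Rightarrow> (int^'d \<Rightarrow> complex) \<Rightarrow> (int^'d \<Rightarrow> complex)" where
  "evolZ t \<psi> n = (\<Sum>k. ((\<i> * complex_of_real t) ^ k / fact k) * (adjZ ^^ k) \<psi> n)"

definition in_l2 :: "(int^'d \<Rightarrow> complex) \<Rightarrow> bool" where
  "in_l2 \<psi> \<longleftrightarrow> (\<lambda>n. (cmod (\<psi> n))\<^sup>2) summable_on UNIV"

definition l2norm_sq :: "(int^'d \<Rightarrow> complex) \<Rightarrow> real" where
  "l2norm_sq \<psi> = (\<Sum>\<^sub>\<infinity>n. (cmod (\<psi> n))\<^sup>2)"

definition l2inner :: "(int^'d \<Rightarrow> complex) \<Rightarrow> (int^'d \<Rightarrow> complex) \<Rightarrow> complex" where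
  "l2inner \<phi> \<psi> = (\<Sum>\<^sub>\<infinity>n. cnj (\<phi> n) * \<psi> n)"

definition moment_dens :: "nat \<Rightarrow> (int^'d \<Rightarrow> complex) \<Rightarrow> int^'d \<Rightarrow> real" where
  "moment_dens m \<psi> n = (\<Sum>j\<in>UNIV. \<bar>real_of_int (n $ j)\<bar> ^ (2*m) * (cmod (\<psi> n))\<^sup>2)"

definition moment_sq :: "nat \<Rightarrow> (int^'d \<Rightarrow> complex) \<Rightarrow> real" where
  "moment_sq m \<psi> = (\<Sum>\<^sub>\<infinity>n. moment_dens m \<psi> n)"

end

theory Submission
  imports Defs
begin

text \<open>Write \<open>X\<^sub>j\<close> for multiplication by \<open>n\<^sub>j\<close> (\<open>coord_mult j\<close>) and
  \<open>W\<^sub>j f n = f (n - e\<^sub>j) - f (n + e\<^sub>j)\<close> (\<open>cdiff j\<close>). Then \<open>X\<^sub>j A = A X\<^sub>j + W\<^sub>j\<close> and \<open>W\<^sub>j\<close>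
  commutes with \<open>A\<close>, so \<open>X\<^sub>j e^{itA} = e^{itA} (X\<^sub>j + it W\<^sub>j)\<close>. Iterating,
  \<open>n\<^sub>j\<^sup>m e^{itA} \<psi> = \<Sum>k\<le>m. (it)\<^sup>k e^{itA} \<phi>\<^sub>k\<close> with \<open>\<phi>\<^sub>m = W\<^sub>j\<^sup>m \<psi>\<close>; the moment
  condition puts every \<open>\<phi>\<^sub>k\<close> in \<open>\<ell>\<^sup>2\<close>. As \<open>e^{itA}\<close> is unitary, \<open>\<parallel>n\<^sub>j\<^sup>m e^{itA} \<psi>\<parallel>\<^sup>2\<close>
  is a polynomial in \<open>t\<close> of degree \<open>2m\<close> with leading coefficient \<open>\<parallel>W\<^sub>j\<^sup>m \<psi>\<parallel>\<^sup>2\<close>.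
  Since \<open>W\<^sub>j\<close> is skew-adjoint, \<open>\<parallel>W\<^sub>j\<^sup>m \<psi>\<parallel>\<^sup>2 = (-1)\<^sup>m \<langle>\<psi>, W\<^sub>j\<^sup>2\<^sup>m \<psi>\<rangle>\<close>, which the
  binomial theorem expands into the stated sum; moreover \<open>\<parallel>W\<^sub>j\<parallel> \<le> 2\<close>, and \<open>W\<^sub>j\<close> has no
  nonzero square-summable kernel element.\<close>

lemma summable_on_shift:
  fixes g :: "'a::group_add \<Rightarrow> 'b::{comm_monoid_add,t2_space}"
  shows "(\<lambda>n. g (n + v)) summable_on UNIV \<longleftrightarrow> g summable_on UNIV"
  by (rule summable_on_reindex_bij_witness[of UNIV "\<lambda>n. n - v" "\<lambda>n. n + v"]) auto

lemma infsum_shift: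
  fixes g :: "'a::group_add \<Rightarrow> 'b::{comm_monoid_add,t2_space}"
  shows "(\<Sum>\<^sub>\<infinity>n. g (n + v)) = (\<Sum>\<^sub>\<infinity>n. g n)"
  by (rule infsum_reindex_bij_witness[of UNIV "\<lambda>n. n - v" "\<lambda>n. n + v"]) auto

lemma summable_on_finite_sum:
  fixes F :: "'i \<Rightarrow> 'a \<Rightarrow> 'b::topological_comm_monoid_add"
  shows "finite I \<Longrightarrow> (\<And>i. i \<in> I \<Longrightarrow> F i summable_on A) \<Longrightarrow> (\<lambda>x. \<Sum>i\<in>I. F i x) summable_on A"
  by (induction I rule: finite_induct) (simp_all add: summable_on_add)

lemma infsum_finite_sum:
  fixes F :: "'i \<Rightarrow> 'a \<Rightarrow> 'b::{topological_comm_monoid_add,t2_space}"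
  shows "finite I \<Longrightarrow> (\<And>i. i \<in> I \<Longrightarrow> F i summable_on A) \<Longrightarrow>
    (\<Sum>\<^sub>\<infinity>x\<in>A. \<Sum>i\<in>I. F i x) = (\<Sum>i\<in>I. \<Sum>\<^sub>\<infinity>x\<in>A. F i x)"
  by (induction I rule: finite_induct) (simp_all add: infsum_add summable_on_finite_sum)

lemma infsum_UNIV_eq_suminf:
  fixes f :: "nat \<Rightarrow> complex"
  assumes "f summable_on UNIV"
  shows "infsum f UNIV = suminf f"
proof -
  have "(\<lambda>n. norm (f n)) summable_on UNIV"
    using assms summable_on_iff_abs_summable_on_complex by blast
  then have norm_summable: "summable (\<lambda>n. norm (f n))"
    using summable_on_UNIV_nonneg_real_iff[of "\<lambda>n. norm (f n)"] by simp
  then have "(f has_sum suminf f) UNIV"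
    by (intro norm_summable_imp_has_sum summable_sums[OF summable_norm_cancel[OF norm_summable]])
  then show ?thesis
    by (rule infsumI)
qed

lemma summable_on_product_nonneg:
  fixes a b :: "nat \<Rightarrow> real"
  assumes "\<And>k. 0 \<le> a k" "\<And>k. 0 \<le> b k" "summable a" "summable b"
  shows "(\<lambda>(k, l). a k * b l) summable_on UNIV"
proof -
  have "(b has_sum suminf b) UNIV"
    using assms by (intro sums_nonneg_imp_has_sum summable_sums)
  moreover have "(\<lambda>k. a k * suminf b) summable_on UNIV"
    using assms by (simp add: summable_on_UNIV_nonneg_real_iff suminf_nonneg summable_mult2)
  ultimately have "(\<lambda>(k, l). a k * b l) summable_on UNIV \<times> UNIV"
    using assms by (intro summable_on_SigmaI[where g="\<lambda>k. a k * suminf b"]) (auto intro: has_sum_cmult_right)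
  then show ?thesis
    by simp
qed

lemma suminf_suminf_diagonal:
  fixes a b \<beta> :: "nat \<Rightarrow> complex"
  assumes sa: "summable (\<lambda>k. norm (a k) * C ^ k)" and sb: "summable (\<lambda>k. norm (b k) * C ^ k)"
    and \<beta>: "\<And>N. norm (\<beta> N) \<le> C ^ N * B" and C: "0 \<le> C"
  shows "(\<Sum>k. \<Sum>l. a k * b l * \<beta> (k + l)) = (\<Sum>N. (\<Sum>k\<le>N. a k * b (N - k)) * \<beta> N)"
proof -
  define F where "F k l = a k * b l * \<beta> (k + l)" for k l
  have B: "0 \<le> B"
    using order_trans[OF norm_ge_zero \<beta>[of 0]] by simp
  have F_le: "norm (F k l) \<le> (norm (a k) * C ^ k) * (norm (b l) * C ^ l * B)" for k l
  proof -
    have "norm (F k l) \<le> norm (a k) * norm (b l) * (C ^ (k + l) * B)"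
      unfolding F_def norm_mult by (intro mult_left_mono \<beta>) simp
    then show ?thesis
      by (simp add: power_add algebra_simps)
  qed
  have F_summable: "(\<lambda>(k, l). F k l) summable_on UNIV"
    unfolding summable_on_iff_abs_summable_on_complex
    by (rule summable_on_comparison_test[OF summable_on_product_nonneg[OF _ _ sa summable_mult2[OF sb, of B]]])
       (auto simp: F_le C B)
  have F_row: "(\<lambda>l. F k l) summable_on UNIV" for k
  proof (rule norm_summable_imp_summable_on)
    show "summable (\<lambda>l. norm (F k l))"
      by (rule summable_comparison_test'[OF summable_mult[OF summable_mult2[OF sb, of B],
            of "norm (a k) * C ^ k"]]) (simp add: F_le)
  qed
  have diag_summable: "(\<lambda>(N, k). F k (N - k)) summable_on (SIGMA N:UNIV. {..N})"
    using F_summable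
    by (subst summable_on_reindex_bij_witness[where j="\<lambda>(k, l). (k + l, k)" and i="\<lambda>(N, k). (k, N - k)",
          symmetric]) auto
  have "(\<Sum>k. \<Sum>l. F k l) = (\<Sum>k. \<Sum>\<^sub>\<infinity>l. F k l)"
    by (simp add: infsum_UNIV_eq_suminf F_row)
  also have "\<dots> = (\<Sum>\<^sub>\<infinity>k. \<Sum>\<^sub>\<infinity>l. F k l)"
    using F_summable by (intro infsum_UNIV_eq_suminf[symmetric] summable_on_Sigma_banach) simp
  also have "\<dots> = infsum (\<lambda>(k, l). F k l) (UNIV \<times> UNIV)"
    using F_summable by (intro infsum_Sigma'_banach) simp
  also have "\<dots> = (\<Sum>\<^sub>\<infinity>(N, k)\<in>(SIGMA N:UNIV. {..N}). F k (N - k))"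
    by (rule infsum_reindex_bij_witness[where j="\<lambda>(k, l). (k + l, k)" and i="\<lambda>(N, k). (k, N - k)"]) auto
  also have "\<dots> = (\<Sum>\<^sub>\<infinity>N. \<Sum>k\<le>N. F k (N - k))"
    using diag_summable by (subst infsum_Sigma'_banach[symmetric]) auto
  also have "\<dots> = (\<Sum>N. \<Sum>k\<le>N. F k (N - k))"
    using summable_on_Sigma_banach[OF diag_summable] by (simp add: infsum_UNIV_eq_suminf)
  finally show ?thesis
    by (simp add: F_def sum_distrib_right)
qed

lemma norm_suminf_sq_le:
  fixes c a :: "nat \<Rightarrow> complex"
  assumes "summable (\<lambda>k. norm (c k))" and "summable (\<lambda>k. norm (c k) * (norm (a k))\<^sup>2)"
    and "summable (\<lambda>k. c k * a k)"
  shows "(norm (\<Sum>k. c k * a k))\<^sup>2 \<le> (\<Sum>k. norm (c k)) * (\<Sum>k. norm (c k) * (norm (a k))\<^sup>2)"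
proof (rule LIMSEQ_le)
  show "(\<lambda>K. (norm (\<Sum>k<K. c k * a k))\<^sup>2) \<longlonglongrightarrow> (norm (\<Sum>k. c k * a k))\<^sup>2"
    by (intro tendsto_intros summable_LIMSEQ assms)
  show "(\<lambda>K. (\<Sum>k<K. norm (c k)) * (\<Sum>k<K. norm (c k) * (norm (a k))\<^sup>2))
        \<longlonglongrightarrow> (\<Sum>k. norm (c k)) * (\<Sum>k. norm (c k) * (norm (a k))\<^sup>2)"
    by (intro tendsto_intros summable_LIMSEQ assms)
  have "(norm (\<Sum>k<K. c k * a k))\<^sup>2 \<le> (\<Sum>k<K. norm (c k)) * (\<Sum>k<K. norm (c k) * (norm (a k))\<^sup>2)" for K
  proof -
    have "norm (\<Sum>k<K. c k * a k) \<le> (\<Sum>k<K. sqrt (norm (c k)) * (sqrt (norm (c k)) * norm (a k)))"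
      using norm_sum[of "\<lambda>k. c k * a k" "{..<K}"] by (simp add: norm_mult mult.assoc[symmetric])
    then have "(norm (\<Sum>k<K. c k * a k))\<^sup>2 \<le> (\<Sum>k<K. sqrt (norm (c k)) * (sqrt (norm (c k)) * norm (a k)))\<^sup>2"
      by (simp add: power_mono)
    also have "\<dots> \<le> (\<Sum>k<K. (sqrt (norm (c k)))\<^sup>2) * (\<Sum>k<K. (sqrt (norm (c k)) * norm (a k))\<^sup>2)"
      by (rule Cauchy_Schwarz_ineq_sum)
    finally show ?thesis
      by (simp add: power_mult_distrib)
  qed
  then show "\<exists>N. \<forall>K\<ge>N. (norm (\<Sum>k<K. c k * a k))\<^sup>2 \<le> (\<Sum>k<K. norm (c k)) * (\<Sum>k<K. norm (c k) * (norm (a k))\<^sup>2)"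
    by blast
qed

lemma norm_add_sq_le:
  fixes a b :: "'a::real_normed_vector"
  shows "(norm (a + b))\<^sup>2 \<le> 2 * (norm a)\<^sup>2 + 2 * (norm b)\<^sup>2"
proof -
  have "(norm (a + b))\<^sup>2 \<le> (norm a + norm b)\<^sup>2"
    by (simp add: norm_triangle_ineq power_mono)
  also have "\<dots> \<le> 2 * (norm a)\<^sup>2 + 2 * (norm b)\<^sup>2"
    using sum_squares_bound[of "norm a" "norm b"] by (simp add: power2_sum)
  finally show ?thesis .
qed

lemma norm_diff_sq_le:
  fixes a b :: "'a::real_normed_vector"
  shows "(norm (a - b))\<^sup>2 \<le> 2 * (norm a)\<^sup>2 + 2 * (norm b)\<^sup>2"
  using norm_add_sq_le[of a "- b"] by simp

lemma sum_atMost_Suc_binomial: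
  fixes g :: "nat \<Rightarrow> 'a::comm_semiring_1"
  shows "(\<Sum>q\<le>Suc k. of_nat (Suc k choose q) * g q)
       = (\<Sum>q\<le>k. of_nat (k choose q) * g q) + (\<Sum>q\<le>k. of_nat (k choose q) * g (Suc q))"
proof -
  have "(\<Sum>q\<le>Suc k. of_nat (Suc k choose q) * g q)
      = g 0 + (\<Sum>q\<le>k. of_nat (k choose Suc q) * g (Suc q)) + (\<Sum>q\<le>k. of_nat (k choose q) * g (Suc q))"
    by (subst sum.atMost_Suc_shift) (simp add: sum.distrib distrib_right add_ac)
  also have "g 0 + (\<Sum>q\<le>k. of_nat (k choose Suc q) * g (Suc q)) = (\<Sum>q\<le>Suc k. of_nat (k choose q) * g q)"
    by (subst sum.atMost_Suc_shift) simp
  also have "\<dots> = (\<Sum>q\<le>k. of_nat (k choose q) * g q)"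
    by (simp add: binomial_eq_0)
  finally show ?thesis .
qed

lemma sum_atMost_double_split:
  fixes h :: "nat \<Rightarrow> 'a::comm_monoid_add"
  shows "(\<Sum>q\<le>2*m. h q) = (\<Sum>q<m. h q) + h m + (\<Sum>q<m. h (2*m - q))"
proof -
  have U: "{..2*m} = {..<m} \<union> ({m} \<union> {m<..2*m})"
    by auto
  have "(\<Sum>q\<le>2*m. h q) = (\<Sum>q<m. h q) + (h m + (\<Sum>q\<in>{m<..2*m}. h q))"
    unfolding U by (subst sum.union_disjoint) (auto simp: sum.union_disjoint)
  also have "(\<Sum>q\<in>{m<..2*m}. h q) = (\<Sum>q<m. h (2*m - q))"
    by (rule sum.reindex_bij_witness[where i="\<lambda>q. 2*m - q" and j="\<lambda>q. 2*m - q"]) auto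
  finally show ?thesis
    by (simp add: add.assoc)
qed

lemma tendsto_power_ratio_at_top:
  assumes "k \<le> m" "l \<le> m"
  shows "((\<lambda>t::real. complex_of_real (t ^ (k + l) / t ^ (2 * m))) \<longlongrightarrow> (if k = m \<and> l = m then 1 else 0)) at_top"
proof (cases "k = m \<and> l = m")
  case True
  have "\<forall>\<^sub>F t in at_top. complex_of_real (t ^ (k + l) / t ^ (2 * m)) = 1"
    using eventually_gt_at_top[of "0::real"] by eventually_elim (use True in \<open>simp add: mult_2\<close>)
  then show ?thesis
    using True by (simp add: tendsto_eventually)
next
  case False
  define p where "p = 2 * m - (k + l)"
  have p: "0 < p" "2 * m = (k + l) + p"
    using assms False by (auto simp: p_def)
  have ratio: "inverse t ^ p = t ^ (k + l) / t ^ (2 * m)" if "t > 0" for t :: real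
    using that by (simp add: p(2) power_add power_inverse inverse_eq_divide power_one_over)
  have "((\<lambda>t::real. inverse t ^ p) \<longlongrightarrow> 0) at_top"
    using tendsto_power[OF tendsto_inverse_0_at_top[OF filterlim_ident], of p] p(1)
    by (simp only: zero_power)
  moreover have "\<forall>\<^sub>F t in at_top. inverse (t::real) ^ p = t ^ (k + l) / t ^ (2 * m)"
    using eventually_gt_at_top[of "0::real"] by eventually_elim (rule ratio)
  ultimately have "((\<lambda>t::real. t ^ (k + l) / t ^ (2 * m)) \<longlongrightarrow> 0) at_top"
    by (rule Lim_transform_eventually)
  from tendsto_of_real[OF this] show ?thesis
    unfolding of_real_0 if_not_P[OF False] .
qed

section \<open>Square-summable functions on the lattice\<close>

lemma in_l2_add: "in_l2 f \<Longrightarrow> in_l2 g \<Longrightarrow> in_l2 (\<lambda>n. f n + g n)"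
  unfolding in_l2_def
  by (rule summable_on_comparison_test[where f="\<lambda>n. 2 * (cmod (f n))\<^sup>2 + 2 * (cmod (g n))\<^sup>2"])
     (auto intro!: summable_on_add summable_on_cmult_right norm_add_sq_le)

lemma in_l2_diff: "in_l2 f \<Longrightarrow> in_l2 g \<Longrightarrow> in_l2 (\<lambda>n. f n - g n)"
  unfolding in_l2_def
  by (rule summable_on_comparison_test[where f="\<lambda>n. 2 * (cmod (f n))\<^sup>2 + 2 * (cmod (g n))\<^sup>2"])
     (auto intro!: summable_on_add summable_on_cmult_right norm_diff_sq_le)

lemma in_l2_cmult: "in_l2 f \<Longrightarrow> in_l2 (\<lambda>n. c * f n)"
  unfolding in_l2_def
  by (drule summable_on_cmult_right[where c="(cmod c)\<^sup>2"]) (simp add: norm_mult power_mult_distrib)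

lemma in_l2_sum: "finite K \<Longrightarrow> (\<And>k. k \<in> K \<Longrightarrow> in_l2 (F k)) \<Longrightarrow> in_l2 (\<lambda>n. \<Sum>k\<in>K. F k n)"
proof (induction K rule: finite_induct)
  case empty
  then show ?case
    by (simp add: in_l2_def)
next
  case (insert k K)
  then show ?case
    by (simp add: in_l2_add)
qed

lemma in_l2_shift: "in_l2 f \<Longrightarrow> in_l2 (\<lambda>n. f (n + v))"
  unfolding in_l2_def using summable_on_shift[of "\<lambda>n. (cmod (f n))\<^sup>2" v] by simp

lemma in_l2_shift_diff: "in_l2 f \<Longrightarrow> in_l2 (\<lambda>n. f (n - v))"
  using in_l2_shift[of f "- v"] by simp

lemma l2norm_sq_nonneg: "0 \<le> l2norm_sq f"
  unfolding l2norm_sq_def by (simp add: infsum_nonneg)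

lemma norm_sq_le_l2norm_sq: "in_l2 f \<Longrightarrow> (cmod (f n))\<^sup>2 \<le> l2norm_sq f"
  unfolding in_l2_def l2norm_sq_def
  using finite_sum_le_infsum[of "\<lambda>n. (cmod (f n))\<^sup>2" UNIV "{n}"] by simp

lemma norm_le_sqrt_l2norm_sq: "in_l2 f \<Longrightarrow> cmod (f n) \<le> sqrt (l2norm_sq f)"
  using norm_sq_le_l2norm_sq real_le_rsqrt by blast

lemma l2norm_sq_pos:
  assumes "in_l2 f" "f \<noteq> (\<lambda>_. 0)"
  shows "0 < l2norm_sq f"
proof -
  obtain n where "f n \<noteq> 0"
    using assms(2) by auto
  then have "0 < (cmod (f n))\<^sup>2"
    by simp
  also have "\<dots> \<le> l2norm_sq f"
    by (rule norm_sq_le_l2norm_sq[OF assms(1)])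
  finally show ?thesis .
qed

lemma l2norm_sq_shift: "l2norm_sq (\<lambda>n. f (n + v)) = l2norm_sq f"
  unfolding l2norm_sq_def using infsum_shift[of "\<lambda>n. (cmod (f n))\<^sup>2" v] by simp

lemma l2norm_sq_sum_le:
  assumes "finite I" "\<And>i. i \<in> I \<Longrightarrow> in_l2 (f i)"
  shows "l2norm_sq (\<lambda>n. \<Sum>i\<in>I. f i n) \<le> real (card I) * (\<Sum>i\<in>I. l2norm_sq (f i))"
proof -
  have summable: "(\<lambda>n. (cmod (f i n))\<^sup>2) summable_on UNIV" if "i \<in> I" for i
    using assms(2)[OF that] unfolding in_l2_def .
  have "(cmod (\<Sum>i\<in>I. f i n))\<^sup>2 \<le> real (card I) * (\<Sum>i\<in>I. (cmod (f i n))\<^sup>2)" for n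
  proof -
    have "(cmod (\<Sum>i\<in>I. f i n))\<^sup>2 \<le> (\<Sum>i\<in>I. cmod (f i n))\<^sup>2"
      by (simp add: norm_sum power_mono)
    also have "\<dots> \<le> (\<Sum>i\<in>I. (cmod (f i n))\<^sup>2) * real (card I)"
      by (rule sum_squared_le_sum_of_squares)
    finally show ?thesis
      by (simp add: mult.commute)
  qed
  then have "l2norm_sq (\<lambda>n. \<Sum>i\<in>I. f i n) \<le> (\<Sum>\<^sub>\<infinity>n. real (card I) * (\<Sum>i\<in>I. (cmod (f i n))\<^sup>2))"
    unfolding l2norm_sq_def
    using in_l2_sum[OF assms] summable assms(1) unfolding in_l2_def
    by (intro infsum_mono summable_on_cmult_right summable_on_finite_sum) auto
  also have "\<dots> = real (card I) * (\<Sum>i\<in>I. l2norm_sq (f i))"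
    unfolding l2norm_sq_def by (simp add: infsum_cmult_right' infsum_finite_sum assms(1) summable)
  finally show ?thesis .
qed

lemma l2norm_sq_add_le:
  assumes f: "in_l2 f" and g: "in_l2 g"
  shows "l2norm_sq (\<lambda>n. f n + g n) \<le> 2 * l2norm_sq f + 2 * l2norm_sq g"
proof -
  have sf: "(\<lambda>n. 2 * (cmod (f n))\<^sup>2) summable_on UNIV"
    using f unfolding in_l2_def by (rule summable_on_cmult_right)
  have sg: "(\<lambda>n. 2 * (cmod (g n))\<^sup>2) summable_on UNIV"
    using g unfolding in_l2_def by (rule summable_on_cmult_right)
  have "l2norm_sq (\<lambda>n. f n + g n) \<le> (\<Sum>\<^sub>\<infinity>n. 2 * (cmod (f n))\<^sup>2 + 2 * (cmod (g n))\<^sup>2)"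
    unfolding l2norm_sq_def using in_l2_add[OF f g] summable_on_add[OF sf sg] unfolding in_l2_def
    by (rule infsum_mono) (rule norm_add_sq_le)
  also have "\<dots> = 2 * l2norm_sq f + 2 * l2norm_sq g"
    using sf sg unfolding l2norm_sq_def by (simp add: infsum_add infsum_cmult_right')
  finally show ?thesis .
qed

lemma l2inner_summable:
  assumes "in_l2 f" "in_l2 g"
  shows "(\<lambda>n. cnj (f n) * g n) summable_on UNIV"
proof -
  have sq: "x * y \<le> x\<^sup>2 + y\<^sup>2" if "0 \<le> x" "0 \<le> y" for x y :: real
    using sum_squares_bound[of x y] mult_nonneg_nonneg[OF that] by linarith
  show ?thesis
    using assms unfolding in_l2_def summable_on_iff_abs_summable_on_complex
    by (rule summable_on_comparison_test[where f="\<lambda>n. (cmod (f n))\<^sup>2 + (cmod (g n))\<^sup>2",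
          OF summable_on_add]) (auto intro!: sq simp: norm_mult)
qed

lemma l2inner_add_right: "in_l2 f \<Longrightarrow> in_l2 g \<Longrightarrow> in_l2 h \<Longrightarrow>
  l2inner f (\<lambda>n. g n + h n) = l2inner f g + l2inner f h"
  unfolding l2inner_def by (simp add: distrib_left infsum_add l2inner_summable)

lemma l2inner_cmult_right: "l2inner f (\<lambda>n. c * g n) = c * l2inner f g"
  unfolding l2inner_def by (simp add: infsum_cmult_right' mult.left_commute)

lemma l2inner_diff_right: "in_l2 f \<Longrightarrow> in_l2 g \<Longrightarrow> in_l2 h \<Longrightarrow>
  l2inner f (\<lambda>n. g n - h n) = l2inner f g - l2inner f h"
proof -
  assume "in_l2 f" "in_l2 g" "in_l2 h"
  then have "l2inner f (\<lambda>n. g n + (- 1) * h n) = l2inner f g + l2inner f (\<lambda>n. (- 1) * h n)"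
    by (intro l2inner_add_right in_l2_cmult)
  then show ?thesis
    using l2inner_cmult_right[of f "- 1" h] by simp
qed

lemma l2inner_sum_right: "finite K \<Longrightarrow> in_l2 f \<Longrightarrow> (\<And>k. k \<in> K \<Longrightarrow> in_l2 (G k)) \<Longrightarrow>
  l2inner f (\<lambda>n. \<Sum>k\<in>K. G k n) = (\<Sum>k\<in>K. l2inner f (G k))"
proof (induction K rule: finite_induct)
  case empty
  then show ?case
    by (simp add: l2inner_def)
next
  case (insert k K)
  then show ?case
    by (simp add: l2inner_add_right in_l2_sum)
qed

lemma cnj_l2inner: "cnj (l2inner f g) = l2inner g f"
  unfolding l2inner_def by (subst infsum_cnj[symmetric]) (simp add: mult.commute)

lemma l2inner_self: "in_l2 f \<Longrightarrow> l2inner f f = complex_of_real (l2norm_sq f)"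
proof -
  assume "in_l2 f"
  then have "((\<lambda>n. complex_of_real ((cmod (f n))\<^sup>2)) has_sum complex_of_real (l2norm_sq f)) UNIV"
    unfolding in_l2_def l2norm_sq_def by (intro has_sum_of_real) simp
  moreover have "complex_of_real ((cmod (f n))\<^sup>2) = cnj (f n) * f n" for n
    using complex_norm_square[of "f n"] by (simp add: mult.commute)
  ultimately show ?thesis
    unfolding l2inner_def by (simp add: infsumI)
qed

lemma l2inner_shift_left: "l2inner (\<lambda>n. f (n - v)) g = l2inner f (\<lambda>n. g (n + v))"
  unfolding l2inner_def using infsum_shift[of "\<lambda>n. cnj (f n) * g (n + v)" "- v"] by simp

lemma l2inner_shift_left': "l2inner (\<lambda>n. f (n + v)) g = l2inner f (\<lambda>n. g (n - v))"
  using l2inner_shift_left[of f "- v" g] by simp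

lemma l2inner_sum_sum:
  assumes "finite K" "finite L" "\<And>k. k \<in> K \<Longrightarrow> in_l2 (F k)" "\<And>l. l \<in> L \<Longrightarrow> in_l2 (G l)"
  shows "l2inner (\<lambda>n. \<Sum>k\<in>K. a k * F k n) (\<lambda>n. \<Sum>l\<in>L. b l * G l n)
       = (\<Sum>k\<in>K. \<Sum>l\<in>L. cnj (a k) * b l * l2inner (F k) (G l))"
proof -
  have left: "l2inner (\<lambda>n. \<Sum>k\<in>K. a k * F k n) g = (\<Sum>k\<in>K. cnj (a k) * l2inner (F k) g)"
    if "in_l2 g" for g
  proof -
    have "l2inner g (\<lambda>n. \<Sum>k\<in>K. a k * F k n) = (\<Sum>k\<in>K. a k * l2inner g (F k))"
      using assms that by (subst l2inner_sum_right) (auto intro: in_l2_cmult simp: l2inner_cmult_right)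
    then have "cnj (l2inner g (\<lambda>n. \<Sum>k\<in>K. a k * F k n)) = (\<Sum>k\<in>K. cnj (a k) * cnj (l2inner g (F k)))"
      by simp
    then show ?thesis
      by (simp add: cnj_l2inner)
  qed
  have "l2inner (\<lambda>n. \<Sum>k\<in>K. a k * F k n) (\<lambda>n. \<Sum>l\<in>L. b l * G l n)
      = (\<Sum>l\<in>L. b l * l2inner (\<lambda>n. \<Sum>k\<in>K. a k * F k n) (G l))"
    using assms in_l2_sum[OF assms(1), of "\<lambda>k n. a k * F k n"]
    by (subst l2inner_sum_right) (auto intro: in_l2_cmult simp: l2inner_cmult_right)
  also have "\<dots> = (\<Sum>k\<in>K. \<Sum>l\<in>L. cnj (a k) * b l * l2inner (F k) (G l))"
    using assms(4) by (simp add: left sum_distrib_left mult_ac sum.swap[of _ L K])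
  finally show ?thesis .
qed

section \<open>The adjacency operator and its commutator with a coordinate\<close>

definition coord_mult :: "'d \<Rightarrow> (int^'d \<Rightarrow> complex) \<Rightarrow> int^'d \<Rightarrow> complex" where
  "coord_mult j f n = of_int (n $ j) * f n"

definition cdiff :: "'d \<Rightarrow> (int^'d \<Rightarrow> complex) \<Rightarrow> int^'d \<Rightarrow> complex" where
  "cdiff j f n = f (n - axis j 1) - f (n + axis j 1)"

lemma adjZ_eq: "adjZ f = (\<lambda>n. \<Sum>i\<in>UNIV. f (n - axis i 1) + f (n + axis i 1))"
  by (rule ext) (simp add: adjZ_def)

lemma cdiff_eq: "cdiff j f = (\<lambda>n. f (n - axis j 1) - f (n + axis j 1))"
  by (rule ext) (simp add: cdiff_def)

lemma adjZ_add: "adjZ (\<lambda>n. f n + g n) = (\<lambda>n. adjZ f n + adjZ g n)"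
  by (rule ext) (simp add: adjZ_def sum.distrib algebra_simps)

lemma adjZ_cmult: "adjZ (\<lambda>n. c * f n) = (\<lambda>n. c * adjZ f n)"
  by (rule ext) (simp add: adjZ_def sum_distrib_left algebra_simps)

lemma funpow_adjZ_add: "(adjZ ^^ k) (\<lambda>n. f n + g n) = (\<lambda>n. (adjZ ^^ k) f n + (adjZ ^^ k) g n)"
  by (induction k) (simp_all add: adjZ_add)

lemma funpow_adjZ_zero: "(adjZ ^^ k) (\<lambda>n. 0) = (\<lambda>n. 0)"
  by (induction k) (simp_all add: adjZ_def)

lemma coord_mult_zero: "coord_mult j (\<lambda>n. 0) = (\<lambda>n. 0)"
  by (rule ext) (simp add: coord_mult_def)

lemma cdiff_zero: "cdiff j (\<lambda>n. 0) = (\<lambda>n. 0)"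
  by (rule ext) (simp add: cdiff_def)

lemma adjZ_cdiff: "adjZ (cdiff j f) = cdiff j (adjZ f)"
  by (rule ext) (simp add: adjZ_def cdiff_def sum_subtractf sum.distrib algebra_simps)

lemma funpow_adjZ_cdiff: "(adjZ ^^ k) (cdiff j f) = cdiff j ((adjZ ^^ k) f)"
  by (induction k) (simp_all add: adjZ_cdiff)

lemma coord_mult_adjZ: "coord_mult j (adjZ f) = (\<lambda>n. adjZ (coord_mult j f) n + cdiff j f n)"
proof (rule ext)
  fix n
  have "adjZ (coord_mult j f) n = (\<Sum>i\<in>UNIV. of_int (n $ j) * (f (n - axis i 1) + f (n + axis i 1))
        + (if i = j then f (n + axis i 1) - f (n - axis i 1) else 0))"
    unfolding adjZ_def coord_mult_def
    by (rule sum.cong) (auto simp: axis_def algebra_simps)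
  also have "\<dots> = of_int (n $ j) * adjZ f n + (f (n + axis j 1) - f (n - axis j 1))"
    by (simp add: sum.distrib adjZ_def sum_distrib_left distrib_left)
  finally show "coord_mult j (adjZ f) n = adjZ (coord_mult j f) n + cdiff j f n"
    by (simp add: coord_mult_def cdiff_def)
qed

lemma coord_mult_funpow_adjZ:
  "coord_mult j ((adjZ ^^ k) f)
     = (\<lambda>n. (adjZ ^^ k) (coord_mult j f) n + of_nat k * (adjZ ^^ (k - 1)) (cdiff j f) n)"
proof (induction k)
  case 0
  then show ?case
    by (simp add: coord_mult_def)
next
  case (Suc k)
  have "coord_mult j ((adjZ ^^ Suc k) f)
      = (\<lambda>n. (adjZ ^^ Suc k) (coord_mult j f) n + of_nat k * adjZ ((adjZ ^^ (k - 1)) (cdiff j f)) n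
          + (adjZ ^^ k) (cdiff j f) n)"
    by (simp add: coord_mult_adjZ Suc adjZ_add adjZ_cmult funpow_adjZ_cdiff)
  also have "\<dots> = (\<lambda>n. (adjZ ^^ Suc k) (coord_mult j f) n + of_nat (Suc k) * (adjZ ^^ k) (cdiff j f) n)"
    by (cases k) (simp_all add: algebra_simps)
  finally show ?case
    by simp
qed

lemma norm_funpow_adjZ_le:
  fixes f :: "int^'d \<Rightarrow> complex"
  assumes "\<And>n. cmod (f n) \<le> B"
  shows "cmod ((adjZ ^^ k) f n) \<le> (2 * real CARD('d)) ^ k * B"
proof (induction k arbitrary: n)
  case 0
  then show ?case
    using assms by simp
next
  case (Suc k)
  have "cmod (adjZ ((adjZ ^^ k) f) n) \<le> (\<Sum>i\<in>UNIV. cmod ((adjZ ^^ k) f (n - axis i 1)) + cmod ((adjZ ^^ k) f (n + axis i 1)))"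
    unfolding adjZ_def by (rule order_trans[OF norm_sum sum_mono[OF norm_triangle_ineq]])
  also have "\<dots> \<le> (\<Sum>i\<in>(UNIV::'d set). 2 * ((2 * real CARD('d)) ^ k * B))"
  proof (rule sum_mono)
    fix i :: 'd
    show "cmod ((adjZ ^^ k) f (n - axis i 1)) + cmod ((adjZ ^^ k) f (n + axis i 1))
        \<le> 2 * ((2 * real CARD('d)) ^ k * B)"
      using Suc.IH[of "n - axis i 1"] Suc.IH[of "n + axis i 1"] by linarith
  qed
  finally show ?case
    by (simp add: mult_ac)
qed

lemma in_l2_adjZ:
  assumes f: "in_l2 f"
  shows "in_l2 (adjZ f)"
proof -
  have "in_l2 (\<lambda>n. f (n - axis i 1) + f (n + axis i 1))" for i
    by (rule in_l2_add[OF in_l2_shift_diff[OF f] in_l2_shift[OF f]])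
  then show ?thesis
    unfolding adjZ_eq by (rule in_l2_sum[rotated]) simp
qed

lemma in_l2_funpow_adjZ: "in_l2 f \<Longrightarrow> in_l2 ((adjZ ^^ k) f)"
  by (induction k) (simp_all add: in_l2_adjZ)

lemma l2norm_sq_adjZ_le:
  fixes f :: "int^'d \<Rightarrow> complex"
  assumes f: "in_l2 f"
  shows "l2norm_sq (adjZ f) \<le> (2 * real CARD('d))\<^sup>2 * l2norm_sq f"
proof -
  have pair_le: "l2norm_sq (\<lambda>n. f (n - axis i 1) + f (n + axis i 1)) \<le> 4 * l2norm_sq f" for i :: 'd
    using l2norm_sq_add_le[OF in_l2_shift_diff[OF f] in_l2_shift[OF f], of "axis i 1" "axis i 1"]
      l2norm_sq_shift[of f "axis i 1"] l2norm_sq_shift[of f "- axis i 1"]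
    by simp
  have "l2norm_sq (adjZ f) \<le> real CARD('d) * (\<Sum>i\<in>UNIV. l2norm_sq (\<lambda>n. f (n - axis i 1) + f (n + axis i 1)))"
    unfolding adjZ_eq by (rule l2norm_sq_sum_le) (auto intro: in_l2_add[OF in_l2_shift_diff[OF f] in_l2_shift[OF f]])
  also have "\<dots> \<le> real CARD('d) * (\<Sum>i\<in>(UNIV::'d set). 4 * l2norm_sq f)"
    by (intro mult_left_mono sum_mono pair_le) simp_all
  finally show ?thesis
    by (simp add: power2_eq_square mult_ac)
qed

lemma l2norm_sq_funpow_adjZ_le:
  fixes f :: "int^'d \<Rightarrow> complex"
  assumes f: "in_l2 f"
  shows "l2norm_sq ((adjZ ^^ k) f) \<le> ((2 * real CARD('d))\<^sup>2) ^ k * l2norm_sq f"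
proof (induction k)
  case 0
  then show ?case
    by simp
next
  case (Suc k)
  have "l2norm_sq ((adjZ ^^ Suc k) f) \<le> (2 * real CARD('d))\<^sup>2 * l2norm_sq ((adjZ ^^ k) f)"
    using l2norm_sq_adjZ_le[OF in_l2_funpow_adjZ[OF f]] by simp
  also have "\<dots> \<le> (2 * real CARD('d))\<^sup>2 * (((2 * real CARD('d))\<^sup>2) ^ k * l2norm_sq f)"
    using Suc.IH by (rule mult_left_mono) simp
  finally show ?case
    by (simp add: mult.assoc)
qed

lemma l2inner_adjZ_right:
  assumes "in_l2 h" "in_l2 f"
  shows "l2inner h (adjZ f) = (\<Sum>i\<in>UNIV. l2inner h (\<lambda>n. f (n - axis i 1)) + l2inner h (\<lambda>n. f (n + axis i 1)))"
proof -
  have "l2inner h (adjZ f) = (\<Sum>i\<in>UNIV. l2inner h (\<lambda>n. f (n - axis i 1) + f (n + axis i 1)))"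
    unfolding adjZ_eq[of f] using assms
    by (intro l2inner_sum_right) (auto intro: in_l2_add in_l2_shift in_l2_shift_diff)
  also have "\<dots> = (\<Sum>i\<in>UNIV. l2inner h (\<lambda>n. f (n - axis i 1)) + l2inner h (\<lambda>n. f (n + axis i 1)))"
    using assms by (intro sum.cong refl l2inner_add_right) (auto intro: in_l2_shift in_l2_shift_diff)
  finally show ?thesis .
qed

lemma l2inner_adjZ_left:
  assumes f: "in_l2 f" and h: "in_l2 h"
  shows "l2inner (adjZ f) h = l2inner f (adjZ h)"
proof -
  have "l2inner (adjZ f) h = cnj (l2inner h (adjZ f))"
    by (simp add: cnj_l2inner)
  also have "\<dots> = (\<Sum>i\<in>UNIV. l2inner (\<lambda>n. f (n - axis i 1)) h + l2inner (\<lambda>n. f (n + axis i 1)) h)"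
    by (simp add: l2inner_adjZ_right[OF h f] cnj_l2inner)
  also have "\<dots> = (\<Sum>i\<in>UNIV. l2inner f (\<lambda>n. h (n - axis i 1)) + l2inner f (\<lambda>n. h (n + axis i 1)))"
    by (simp add: l2inner_shift_left l2inner_shift_left' add.commute)
  also have "\<dots> = l2inner f (adjZ h)"
    by (rule l2inner_adjZ_right[OF f h, symmetric])
  finally show ?thesis .
qed

lemma l2inner_funpow_adjZ_left:
  assumes f: "in_l2 f" and h: "in_l2 h"
  shows "l2inner ((adjZ ^^ k) f) h = l2inner f ((adjZ ^^ k) h)"
  using h
proof (induction k arbitrary: h)
  case 0
  then show ?case
    by simp
next
  case (Suc k)
  have "l2inner ((adjZ ^^ Suc k) f) h = l2inner ((adjZ ^^ k) f) (adjZ h)"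
    using in_l2_funpow_adjZ[OF f] Suc.prems by (simp add: l2inner_adjZ_left)
  also have "\<dots> = l2inner f ((adjZ ^^ Suc k) h)"
    using Suc.IH[OF in_l2_adjZ[OF Suc.prems]] by (simp add: funpow_swap1)
  finally show ?case .
qed

section \<open>The evolution\<close>

definition exp_coeff :: "real \<Rightarrow> nat \<Rightarrow> complex" where
  "exp_coeff t k = (\<i> * complex_of_real t) ^ k / fact k"

lemma evolZ_eq_suminf: "evolZ t f n = (\<Sum>k. exp_coeff t k * (adjZ ^^ k) f n)"
  by (simp add: evolZ_def exp_coeff_def)

lemma norm_exp_coeff: "norm (exp_coeff t k) = \<bar>t\<bar> ^ k / fact k"
  by (simp add: exp_coeff_def norm_divide norm_power norm_mult)

lemma cnj_exp_coeff: "cnj (exp_coeff t k) = exp_coeff (- t) k"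
  by (simp add: exp_coeff_def)

lemma exp_coeff_Suc: "exp_coeff t (Suc k) * of_nat (Suc k) = \<i> * complex_of_real t * exp_coeff t k"
proof -
  have cancel: "x / (c * y) * c = x / y" if "c \<noteq> 0" for x c y :: complex
    by (cases "y = 0") (simp_all add: field_simps that)
  have "exp_coeff t (Suc k) * of_nat (Suc k)
      = \<i> * complex_of_real t * (\<i> * complex_of_real t) ^ k / (of_nat (Suc k) * fact k) * of_nat (Suc k)"
    unfolding exp_coeff_def by (simp only: fact_Suc power_Suc of_nat_mult)
  also have "\<dots> = \<i> * complex_of_real t * (\<i> * complex_of_real t) ^ k / fact k"
    by (rule cancel[OF of_nat_neq_0])
  finally show ?thesis
    unfolding exp_coeff_def by simp
qed

lemma summable_norm_exp_coeff_mult_power: "summable (\<lambda>k. norm (exp_coeff t k) * C ^ k)"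
  using summable_exp[of "\<bar>t\<bar> * C"] by (simp add: norm_exp_coeff power_mult_distrib field_simps)

lemma summable_norm_exp_coeff: "summable (\<lambda>k. norm (exp_coeff t k))"
  using summable_norm_exp_coeff_mult_power[of t 1] by simp

lemma exp_coeff_convolution: "(\<Sum>k\<le>N. exp_coeff (- t) k * exp_coeff t (N - k)) = (if N = 0 then 1 else 0)"
proof -
  define S where "S x n = x ^ n /\<^sub>R fact n" for x :: complex and n
  have "exp_coeff s k = S (\<i> * complex_of_real s) k" for s k
    by (simp add: exp_coeff_def S_def scaleR_conv_of_real divide_inverse mult.commute)
  then have "(\<Sum>k\<le>N. exp_coeff (- t) k * exp_coeff t (N - k)) = S (- (\<i> * t) + \<i> * t) N"
    unfolding S_def by (subst exp_series_add_commuting) simp_all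
  then show ?thesis
    by (simp add: S_def)
qed

lemma summable_norm_exp_series:
  fixes f :: "int^'d \<Rightarrow> complex"
  assumes "\<And>n. cmod (f n) \<le> B"
  shows "summable (\<lambda>k. norm (exp_coeff t k * (adjZ ^^ k) f n))"
proof (rule summable_comparison_test')
  show "summable (\<lambda>k. norm (exp_coeff t k) * (2 * real CARD('d)) ^ k * B)"
    by (rule summable_mult2) (rule summable_norm_exp_coeff_mult_power)
  show "norm (norm (exp_coeff t k * (adjZ ^^ k) f n)) \<le> norm (exp_coeff t k) * (2 * real CARD('d)) ^ k * B" for k
  proof -
    have "cmod ((adjZ ^^ k) f n) \<le> (2 * real CARD('d)) ^ k * B"
      by (rule norm_funpow_adjZ_le) (rule assms)
    then show ?thesis
      by (simp add: norm_mult mult.assoc mult_left_mono)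
  qed
qed

lemma evolZ_summable:
  assumes "in_l2 f"
  shows "summable (\<lambda>k. norm (exp_coeff t k * (adjZ ^^ k) f n))"
    and "summable (\<lambda>k. exp_coeff t k * (adjZ ^^ k) f n)"
proof -
  show norm_summable: "summable (\<lambda>k. norm (exp_coeff t k * (adjZ ^^ k) f n))"
    by (rule summable_norm_exp_series) (rule norm_le_sqrt_l2norm_sq[OF assms])
  then show "summable (\<lambda>k. exp_coeff t k * (adjZ ^^ k) f n)"
    by (rule summable_norm_cancel)
qed

lemma evolZ_add:
  "in_l2 f \<Longrightarrow> in_l2 g \<Longrightarrow> evolZ t (\<lambda>n. f n + g n) n = evolZ t f n + evolZ t g n"
  by (simp add: evolZ_eq_suminf funpow_adjZ_add distrib_left suminf_add evolZ_summable)

lemma evolZ_zero: "evolZ t (\<lambda>n. 0) n = 0"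
  by (simp add: evolZ_def funpow_adjZ_zero)

lemma coord_mult_evolZ:
  assumes f: "in_l2 f" and Xf: "in_l2 (coord_mult j f)"
  shows "coord_mult j (evolZ t f) n = evolZ t (coord_mult j f) n + \<i> * complex_of_real t * evolZ t (cdiff j f) n"
proof -
  define g where "g k = exp_coeff t k * (of_nat k * (adjZ ^^ (k - 1)) (cdiff j f) n)" for k
  have Wf: "in_l2 (cdiff j f)"
    unfolding cdiff_eq by (rule in_l2_diff[OF in_l2_shift_diff[OF f] in_l2_shift[OF f]])
  have "(\<lambda>k. g (Suc k)) sums (\<i> * complex_of_real t * evolZ t (cdiff j f) n)"
  proof -
    have "g (Suc k) = \<i> * complex_of_real t * (exp_coeff t k * (adjZ ^^ k) (cdiff j f) n)" for k
      unfolding g_def by (simp only: diff_Suc_1 mult.assoc[symmetric] exp_coeff_Suc)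
    then show ?thesis
      unfolding evolZ_eq_suminf by (simp add: sums_mult summable_sums evolZ_summable(2)[OF Wf])
  qed
  then have g_sums: "g sums (\<i> * complex_of_real t * evolZ t (cdiff j f) n)"
    using sums_Suc_iff[of g] by (simp add: g_def)
  have "coord_mult j (evolZ t f) n = (\<Sum>k. exp_coeff t k * coord_mult j ((adjZ ^^ k) f) n)"
    unfolding coord_mult_def evolZ_eq_suminf
    by (subst suminf_mult[symmetric]) (auto intro: evolZ_summable f simp: algebra_simps)
  also have "\<dots> = (\<Sum>k. exp_coeff t k * (adjZ ^^ k) (coord_mult j f) n + g k)"
    by (simp add: coord_mult_funpow_adjZ g_def distrib_left)
  also have "\<dots> = (\<Sum>k. exp_coeff t k * (adjZ ^^ k) (coord_mult j f) n) + (\<Sum>k. g k)"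
    by (rule suminf_add[symmetric]) (auto intro: evolZ_summable Xf g_sums sums_summable)
  also have "\<dots> = evolZ t (coord_mult j f) n + \<i> * complex_of_real t * evolZ t (cdiff j f) n"
    using sums_unique[OF g_sums] by (simp add: evolZ_eq_suminf)
  finally show ?thesis .
qed

lemma adjZ_evolZ:
  assumes "in_l2 f"
  shows "adjZ (evolZ t f) = evolZ t (adjZ f)"
proof (rule ext)
  fix n
  have "adjZ (evolZ t f) n = (\<Sum>i\<in>UNIV. (\<Sum>k. exp_coeff t k * (adjZ ^^ k) f (n - axis i 1)
      + exp_coeff t k * (adjZ ^^ k) f (n + axis i 1)))"
    by (simp only: adjZ_def evolZ_eq_suminf) (intro sum.cong refl suminf_add evolZ_summable assms)
  also have "\<dots> = (\<Sum>k. \<Sum>i\<in>UNIV. exp_coeff t k * (adjZ ^^ k) f (n - axis i 1)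
      + exp_coeff t k * (adjZ ^^ k) f (n + axis i 1))"
    by (rule suminf_sum[symmetric]) (intro summable_add evolZ_summable assms)
  also have "\<dots> = (\<Sum>k. exp_coeff t k * (adjZ ^^ k) (adjZ f) n)"
    by (simp only: funpow_swap1[symmetric] adjZ_def[of "(adjZ ^^ _) f"] sum_distrib_left distrib_left)
  finally show "adjZ (evolZ t f) n = evolZ t (adjZ f) n"
    by (simp add: evolZ_eq_suminf)
qed

lemma funpow_adjZ_evolZ: "in_l2 f \<Longrightarrow> (adjZ ^^ k) (evolZ t f) = evolZ t ((adjZ ^^ k) f)"
  by (induction k) (simp_all add: adjZ_evolZ in_l2_funpow_adjZ funpow_swap1)

text \<open>Regrouping the double series along \<open>k + l = N\<close> leaves the Cauchy product of the exponential
  series of \<open>-itA\<close> and \<open>itA\<close>.\<close>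

lemma evolZ_inverse:
  fixes f :: "int^'d \<Rightarrow> complex"
  assumes f: "in_l2 f"
  shows "evolZ (- t) (evolZ t f) n = f n"
proof -
  have "evolZ (- t) (evolZ t f) n = (\<Sum>k. exp_coeff (- t) k * evolZ t ((adjZ ^^ k) f) n)"
    by (simp add: evolZ_eq_suminf[of "- t"] funpow_adjZ_evolZ f)
  also have "\<dots> = (\<Sum>k. \<Sum>l. exp_coeff (- t) k * exp_coeff t l * (adjZ ^^ (k + l)) f n)"
  proof -
    have "exp_coeff (- t) k * evolZ t ((adjZ ^^ k) f) n
        = (\<Sum>l. exp_coeff (- t) k * (exp_coeff t l * (adjZ ^^ l) ((adjZ ^^ k) f) n))" for k
      unfolding evolZ_eq_suminf
      by (rule suminf_mult[symmetric]) (rule evolZ_summable(2)[OF in_l2_funpow_adjZ[OF f]])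
    moreover have "(adjZ ^^ l) ((adjZ ^^ k) f) = (adjZ ^^ (k + l)) f" for k l
      by (metis add.commute comp_apply funpow_add)
    ultimately show ?thesis
      by (simp add: mult.assoc)
  qed
  also have "\<dots> = (\<Sum>N. (\<Sum>k\<le>N. exp_coeff (- t) k * exp_coeff t (N - k)) * (adjZ ^^ N) f n)"
  proof (rule suminf_suminf_diagonal[where C="2 * real CARD('d)"])
    show "cmod ((adjZ ^^ N) f n) \<le> (2 * real CARD('d)) ^ N * sqrt (l2norm_sq f)" for N
      by (rule norm_funpow_adjZ_le) (rule norm_le_sqrt_l2norm_sq[OF f])
  qed (rule summable_norm_exp_coeff_mult_power | simp)+
  also have "\<dots> = (\<Sum>N. if N = 0 then (adjZ ^^ N) f n else 0)"
    unfolding exp_coeff_convolution by (intro arg_cong[where f=suminf] ext) simp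
  also have "\<dots> = f n"
    using sums_unique[OF sums_single[of 0 "\<lambda>N. (adjZ ^^ N) f n"]] by simp
  finally show ?thesis .
qed

lemma summable_exp_coeff_mult_norm_sq:
  fixes f :: "int^'d \<Rightarrow> complex"
  assumes f: "in_l2 f"
  shows "summable (\<lambda>k. norm (exp_coeff t k) * (cmod ((adjZ ^^ k) f n))\<^sup>2)"
proof (rule summable_comparison_test')
  let ?B = "sqrt (l2norm_sq f)"
  show "summable (\<lambda>k. norm (exp_coeff t k) * ((2 * real CARD('d))\<^sup>2) ^ k * ?B\<^sup>2)"
    by (rule summable_mult2, rule summable_norm_exp_coeff_mult_power)
  fix k
  have "cmod ((adjZ ^^ k) f n) \<le> (2 * real CARD('d)) ^ k * ?B"
    by (rule norm_funpow_adjZ_le) (rule norm_le_sqrt_l2norm_sq[OF f])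
  then have "(cmod ((adjZ ^^ k) f n))\<^sup>2 \<le> ((2 * real CARD('d)) ^ k * ?B)\<^sup>2"
    by (intro power_mono) auto
  also have "\<dots> = ((2 * real CARD('d))\<^sup>2) ^ k * ?B\<^sup>2"
    by (simp only: power_mult_distrib power_mult[symmetric] mult.commute)
  finally have "norm (exp_coeff t k) * (cmod ((adjZ ^^ k) f n))\<^sup>2
      \<le> norm (exp_coeff t k) * (((2 * real CARD('d))\<^sup>2) ^ k * ?B\<^sup>2)"
    by (rule mult_left_mono) simp
  then show "norm (norm (exp_coeff t k) * (cmod ((adjZ ^^ k) f n))\<^sup>2)
      \<le> norm (exp_coeff t k) * ((2 * real CARD('d))\<^sup>2) ^ k * ?B\<^sup>2"
    by (simp add: mult.assoc)
qed

lemma norm_evolZ_sq_le: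
  assumes f: "in_l2 f"
  shows "(cmod (evolZ t f n))\<^sup>2
    \<le> (\<Sum>k. norm (exp_coeff t k)) * (\<Sum>k. norm (exp_coeff t k) * (cmod ((adjZ ^^ k) f n))\<^sup>2)"
  unfolding evolZ_eq_suminf
  by (rule norm_suminf_sq_le[OF summable_norm_exp_coeff summable_exp_coeff_mult_norm_sq[OF f]
        evolZ_summable(2)[OF f]])

lemma in_l2_evolZ:
  fixes f :: "int^'d \<Rightarrow> complex"
  assumes f: "in_l2 f"
  shows "in_l2 (evolZ t f)"
  unfolding in_l2_def
proof (rule nonneg_bdd_above_summable_on)
  define D where "D = (2 * real CARD('d))\<^sup>2"
  define c where "c k = norm (exp_coeff t k)" for k
  have c_nonneg: "0 \<le> c k" for k
    by (simp add: c_def)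
  have bound_summable: "summable (\<lambda>k. c k * (D ^ k * l2norm_sq f))"
    using summable_mult2[OF summable_norm_exp_coeff_mult_power[of t D], of "l2norm_sq f"]
    by (simp add: c_def mult.assoc)
  show "bdd_above (sum (\<lambda>n. (cmod (evolZ t f n))\<^sup>2) ` {F. F \<subseteq> UNIV \<and> finite F})"
  proof (rule bdd_aboveI2)
    fix F :: "(int^'d) set"
    assume "F \<in> {F. F \<subseteq> UNIV \<and> finite F}"
    then have fin: "finite F"
      by simp
    have "(\<Sum>n\<in>F. (cmod (evolZ t f n))\<^sup>2) \<le> (\<Sum>n\<in>F. suminf c * (\<Sum>k. c k * (cmod ((adjZ ^^ k) f n))\<^sup>2))"
      unfolding c_def by (rule sum_mono) (rule norm_evolZ_sq_le[OF f])
    also have "\<dots> = suminf c * (\<Sum>k. \<Sum>n\<in>F. c k * (cmod ((adjZ ^^ k) f n))\<^sup>2)"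
      unfolding c_def
      by (simp add: sum_distrib_left[symmetric] suminf_sum[symmetric] summable_exp_coeff_mult_norm_sq f)
    also have "\<dots> \<le> suminf c * (\<Sum>k. c k * (D ^ k * l2norm_sq f))"
    proof (intro mult_left_mono suminf_le)
      fix k
      have "(\<Sum>n\<in>F. (cmod ((adjZ ^^ k) f n))\<^sup>2) \<le> l2norm_sq ((adjZ ^^ k) f)"
        using in_l2_funpow_adjZ[OF f, of k] fin unfolding in_l2_def l2norm_sq_def
        by (intro finite_sum_le_infsum) auto
      also have "\<dots> \<le> D ^ k * l2norm_sq f"
        unfolding D_def by (rule l2norm_sq_funpow_adjZ_le[OF f])
      finally show "(\<Sum>n\<in>F. c k * (cmod ((adjZ ^^ k) f n))\<^sup>2) \<le> c k * (D ^ k * l2norm_sq f)"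
        by (simp add: sum_distrib_left[symmetric] mult_left_mono c_nonneg)
    next
      show "summable (\<lambda>k. \<Sum>n\<in>F. c k * (cmod ((adjZ ^^ k) f n))\<^sup>2)"
        unfolding c_def by (intro summable_sum summable_exp_coeff_mult_norm_sq f)
      show "0 \<le> suminf c"
        unfolding c_def by (rule suminf_nonneg[OF summable_norm_exp_coeff]) simp
    qed (rule bound_summable)
    finally show "(\<Sum>n\<in>F. (cmod (evolZ t f n))\<^sup>2) \<le> suminf c * (\<Sum>k. c k * (D ^ k * l2norm_sq f))" .
  qed
qed simp

lemma summable_on_l2inner_evolZ_terms:
  fixes g h :: "int^'d \<Rightarrow> complex"
  assumes g: "in_l2 g" and h: "in_l2 h"
  shows "(\<lambda>(k, n). exp_coeff s k * (cnj (g n) * (adjZ ^^ k) h n)) summable_on UNIV"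
proof -
  define D where "D = (2 * real CARD('d))\<^sup>2"
  define G where "G k n = norm (exp_coeff s k) * ((cmod (g n))\<^sup>2 + (cmod ((adjZ ^^ k) h n))\<^sup>2)" for k n
  have G_row: "((\<lambda>n. G k n) has_sum norm (exp_coeff s k) * (l2norm_sq g + l2norm_sq ((adjZ ^^ k) h))) UNIV"
    for k
    using g in_l2_funpow_adjZ[OF h, of k] unfolding G_def l2norm_sq_def in_l2_def
    by (intro has_sum_cmult_right has_sum_add has_sum_infsum)
  have G_nonneg: "0 \<le> G k n" for k n
    by (simp add: G_def)
  have "(\<lambda>k. norm (exp_coeff s k) * (l2norm_sq g + l2norm_sq ((adjZ ^^ k) h))) summable_on UNIV"
  proof (rule summable_on_comparison_test)
    have "summable (\<lambda>k. norm (exp_coeff s k) * l2norm_sq g + norm (exp_coeff s k) * D ^ k * l2norm_sq h)"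
      by (intro summable_add summable_mult2 summable_norm_exp_coeff summable_norm_exp_coeff_mult_power)
    moreover have "0 \<le> norm (exp_coeff s k) * (l2norm_sq g + D ^ k * l2norm_sq h)" for k
      by (intro mult_nonneg_nonneg add_nonneg_nonneg l2norm_sq_nonneg) (simp_all add: D_def)
    ultimately show "(\<lambda>k. norm (exp_coeff s k) * (l2norm_sq g + D ^ k * l2norm_sq h)) summable_on UNIV"
      using summable_on_UNIV_nonneg_real_iff by (simp add: algebra_simps)
    show "norm (exp_coeff s k) * (l2norm_sq g + l2norm_sq ((adjZ ^^ k) h))
        \<le> norm (exp_coeff s k) * (l2norm_sq g + D ^ k * l2norm_sq h)" for k
      unfolding D_def by (intro mult_left_mono add_left_mono l2norm_sq_funpow_adjZ_le h) simp
  qed (intro mult_nonneg_nonneg add_nonneg_nonneg l2norm_sq_nonneg norm_ge_zero)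
  then have "(\<lambda>(k, n). G k n) summable_on UNIV \<times> UNIV"
    by (intro summable_on_SigmaI[where g="\<lambda>k. norm (exp_coeff s k) * (l2norm_sq g + l2norm_sq ((adjZ ^^ k) h))"])
       (simp_all add: G_row G_nonneg)
  then have G_summable: "(\<lambda>(k, n). G k n) summable_on UNIV"
    by simp
  have sq: "x * y \<le> x\<^sup>2 + y\<^sup>2" if "0 \<le> x" "0 \<le> y" for x y :: real
    using sum_squares_bound[of x y] mult_nonneg_nonneg[OF that] by linarith
  have bound: "norm (exp_coeff s k * (cnj (g n) * (adjZ ^^ k) h n)) \<le> G k n" for k n
    unfolding G_def norm_mult complex_mod_cnj by (intro mult_left_mono sq) auto
  show ?thesis
    unfolding summable_on_iff_abs_summable_on_complex
    by (rule summable_on_comparison_test[OF G_summable]) (auto simp: bound)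
qed

lemma l2inner_evolZ_right:
  fixes g h :: "int^'d \<Rightarrow> complex"
  assumes g: "in_l2 g" and h: "in_l2 h"
  shows "summable (\<lambda>k. exp_coeff s k * l2inner g ((adjZ ^^ k) h))"
    and "l2inner g (evolZ s h) = (\<Sum>k. exp_coeff s k * l2inner g ((adjZ ^^ k) h))"
proof -
  define F where "F k n = exp_coeff s k * (cnj (g n) * (adjZ ^^ k) h n)" for k n
  have F_summable: "(\<lambda>(k, n). F k n) summable_on UNIV"
    unfolding F_def by (rule summable_on_l2inner_evolZ_terms[OF g h])
  have F_row: "(\<lambda>k. F k n) summable_on UNIV" for n
    using summable_on_SigmaD1[where f="\<lambda>n k. F k n", of UNIV "\<lambda>_. UNIV" n]
      summable_on_swap[of "\<lambda>(k, n). F k n" UNIV UNIV] F_summable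
    by (simp add: case_prod_unfold)
  have F_outer: "(\<lambda>k. \<Sum>\<^sub>\<infinity>n. F k n) summable_on UNIV"
    using F_summable by (intro summable_on_Sigma_banach) simp
  have F_inner: "(\<Sum>\<^sub>\<infinity>n. F k n) = exp_coeff s k * l2inner g ((adjZ ^^ k) h)" for k
    unfolding F_def l2inner_def by (rule infsum_cmult_right')
  have "l2inner g (evolZ s h) = (\<Sum>\<^sub>\<infinity>n. \<Sum>k. F k n)"
    unfolding l2inner_def evolZ_eq_suminf F_def
    by (intro infsum_cong, subst suminf_mult[symmetric])
       (auto intro: evolZ_summable h simp: mult.left_commute)
  also have "\<dots> = (\<Sum>\<^sub>\<infinity>n. \<Sum>\<^sub>\<infinity>k. F k n)"
    by (simp add: infsum_UNIV_eq_suminf F_row)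
  also have "\<dots> = (\<Sum>\<^sub>\<infinity>k. \<Sum>\<^sub>\<infinity>n. F k n)"
    using F_summable by (intro infsum_swap_banach[symmetric]) simp
  also have "\<dots> = (\<Sum>k. \<Sum>\<^sub>\<infinity>n. F k n)"
    by (rule infsum_UNIV_eq_suminf[OF F_outer])
  finally show "l2inner g (evolZ s h) = (\<Sum>k. exp_coeff s k * l2inner g ((adjZ ^^ k) h))"
    by (simp add: F_inner)
  show "summable (\<lambda>k. exp_coeff s k * l2inner g ((adjZ ^^ k) h))"
    using summable_on_imp_summable[OF F_outer] by (simp add: F_inner)
qed

lemma l2inner_evolZ_left:
  fixes f h :: "int^'d \<Rightarrow> complex"
  assumes f: "in_l2 f" and h: "in_l2 h"
  shows "l2inner (evolZ t f) h = l2inner f (evolZ (- t) h)"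
proof -
  have "l2inner (evolZ t f) h = cnj (l2inner h (evolZ t f))"
    by (simp add: cnj_l2inner)
  also have "\<dots> = cnj (\<Sum>k. exp_coeff t k * l2inner h ((adjZ ^^ k) f))"
    by (simp only: l2inner_evolZ_right(2)[OF h f])
  also have "\<dots> = (\<Sum>k. cnj (exp_coeff t k * l2inner h ((adjZ ^^ k) f)))"
    using sums_cnj[THEN iffD2, OF summable_sums[OF l2inner_evolZ_right(1)[OF h f, of t]]]
    by (simp add: sums_iff)
  also have "\<dots> = (\<Sum>k. exp_coeff (- t) k * l2inner f ((adjZ ^^ k) h))"
    by (simp add: cnj_exp_coeff cnj_l2inner l2inner_funpow_adjZ_left[OF f h])
  also have "\<dots> = l2inner f (evolZ (- t) h)"
    by (rule l2inner_evolZ_right(2)[OF f h, symmetric])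
  finally show ?thesis .
qed

lemma l2inner_evolZ_evolZ:
  assumes f: "in_l2 f" and g: "in_l2 g"
  shows "l2inner (evolZ t f) (evolZ t g) = l2inner f g"
proof -
  have "l2inner (evolZ t f) (evolZ t g) = l2inner f (evolZ (- t) (evolZ t g))"
    by (rule l2inner_evolZ_left[OF f in_l2_evolZ[OF g]])
  also have "evolZ (- t) (evolZ t g) = g"
    by (rule ext) (rule evolZ_inverse[OF g])
  finally show ?thesis .
qed

section \<open>Weighted square-summability in one coordinate\<close>

text \<open>The weight is \<open>(1 + \<bar>n\<^sub>j\<bar>)\<^sup>2\<^sup>b\<close> rather than \<open>\<bar>n\<^sub>j\<bar>\<^sup>2\<^sup>b\<close>, so that weighted square-summability
  includes square-summability.\<close>

definition coord_weight :: "'d \<Rightarrow> nat \<Rightarrow> int^'d \<Rightarrow> real" where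
  "coord_weight j b n = (1 + \<bar>real_of_int (n $ j)\<bar>) ^ (2 * b)"

definition in_weighted_l2 :: "'d \<Rightarrow> nat \<Rightarrow> (int^'d \<Rightarrow> complex) \<Rightarrow> bool" where
  "in_weighted_l2 j b f \<longleftrightarrow> (\<lambda>n. coord_weight j b n * (cmod (f n))\<^sup>2) summable_on UNIV"

lemma one_le_coord_weight: "1 \<le> coord_weight j b n"
  unfolding coord_weight_def by (rule one_le_power) simp

lemma coord_weight_nonneg: "0 \<le> coord_weight j b n"
  using one_le_coord_weight[of j b n] by linarith

lemma in_weighted_l2_imp_in_l2: "in_weighted_l2 j b f \<Longrightarrow> in_l2 f"
  unfolding in_weighted_l2_def in_l2_def
  by (rule summable_on_comparison_test)
     (auto intro: mult_le_cancel_right1[THEN iffD2] one_le_coord_weight simp: one_le_coord_weight)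

lemma in_weighted_l2_Suc_imp:
  assumes "in_weighted_l2 j (Suc b) f"
  shows "in_weighted_l2 j b f"
  unfolding in_weighted_l2_def
proof (rule summable_on_comparison_test[OF assms[unfolded in_weighted_l2_def]])
  fix n
  have "coord_weight j b n \<le> coord_weight j (Suc b) n"
    unfolding coord_weight_def by (rule power_increasing) auto
  then show "coord_weight j b n * (cmod (f n))\<^sup>2 \<le> coord_weight j (Suc b) n * (cmod (f n))\<^sup>2"
    by (rule mult_right_mono) simp
qed (auto intro: mult_nonneg_nonneg coord_weight_nonneg)

lemma in_weighted_l2_coord_mult: "in_weighted_l2 j (Suc b) f \<Longrightarrow> in_weighted_l2 j b (coord_mult j f)"
  unfolding in_weighted_l2_def
proof (rule summable_on_comparison_test)
  fix n
  have "coord_weight j b n * (cmod (coord_mult j f n))\<^sup>2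
      = (coord_weight j b n * \<bar>real_of_int (n $ j)\<bar>\<^sup>2) * (cmod (f n))\<^sup>2"
    by (simp add: coord_mult_def norm_mult power_mult_distrib)
  also have "\<dots> \<le> coord_weight j (Suc b) n * (cmod (f n))\<^sup>2"
  proof (rule mult_right_mono)
    have "\<bar>real_of_int (n $ j)\<bar>\<^sup>2 \<le> (1 + \<bar>real_of_int (n $ j)\<bar>)\<^sup>2"
      by (rule power_mono) auto
    then have "coord_weight j b n * \<bar>real_of_int (n $ j)\<bar>\<^sup>2 \<le> coord_weight j b n * (1 + \<bar>real_of_int (n $ j)\<bar>)\<^sup>2"
      by (rule mult_left_mono) (rule coord_weight_nonneg)
    also have "\<dots> = coord_weight j (Suc b) n"
      by (simp add: coord_weight_def power_add[symmetric])
    finally show "coord_weight j b n * \<bar>real_of_int (n $ j)\<bar>\<^sup>2 \<le> coord_weight j (Suc b) n" .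
  qed simp
  finally show "coord_weight j b n * (cmod (coord_mult j f n))\<^sup>2 \<le> coord_weight j (Suc b) n * (cmod (f n))\<^sup>2" .
qed (auto intro: mult_nonneg_nonneg coord_weight_nonneg)

lemma coord_weight_shift_le:
  assumes "\<bar>v $ j\<bar> \<le> 1"
  shows "coord_weight j b n \<le> 4 ^ b * coord_weight j b (n + v)"
proof -
  have "\<bar>real_of_int (v $ j)\<bar> \<le> 1"
    using assms by (metis of_int_abs of_int_le_1_iff)
  moreover have "\<bar>real_of_int (n $ j)\<bar> \<le> \<bar>real_of_int (n $ j) + real_of_int (v $ j)\<bar> + \<bar>real_of_int (v $ j)\<bar>"
    using abs_triangle_ineq[of "real_of_int (n $ j) + real_of_int (v $ j)" "- real_of_int (v $ j)"] by simp
  ultimately have "1 + \<bar>real_of_int (n $ j)\<bar> \<le> 2 * (1 + \<bar>real_of_int (n $ j) + real_of_int (v $ j)\<bar>)"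
    using abs_ge_zero[of "real_of_int (n $ j) + real_of_int (v $ j)"]
    by (auto intro: add_le_imp_le_right[of _ "- 1"] elim!: order.trans)
  then have "coord_weight j b n \<le> (2 * (1 + \<bar>real_of_int ((n + v) $ j)\<bar>)) ^ (2 * b)"
    unfolding coord_weight_def by (intro power_mono) auto
  also have "\<dots> = 4 ^ b * coord_weight j b (n + v)"
  proof -
    have "(2 * y) ^ (2 * b) = 4 ^ b * y ^ (2 * b)" for y :: real
      by (simp add: power_mult_distrib power_mult)
    then show ?thesis
      unfolding coord_weight_def .
  qed
  finally show ?thesis .
qed

lemma in_weighted_l2_shift:
  assumes "in_weighted_l2 j b f" "\<bar>v $ j\<bar> \<le> 1"
  shows "in_weighted_l2 j b (\<lambda>n. f (n + v))"
  unfolding in_weighted_l2_def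
proof (rule summable_on_comparison_test)
  show "(\<lambda>n. 4 ^ b * (coord_weight j b (n + v) * (cmod (f (n + v)))\<^sup>2)) summable_on UNIV"
    using assms(1) unfolding in_weighted_l2_def
    by (intro summable_on_cmult_right) (simp add: summable_on_shift[of "\<lambda>n. coord_weight j b n * (cmod (f n))\<^sup>2"])
  show "coord_weight j b n * (cmod (f (n + v)))\<^sup>2 \<le> 4 ^ b * (coord_weight j b (n + v) * (cmod (f (n + v)))\<^sup>2)" for n
    using coord_weight_shift_le[OF assms(2), of b n] by (simp add: mult.assoc[symmetric] mult_right_mono)
qed (auto intro: mult_nonneg_nonneg coord_weight_nonneg)

lemma in_weighted_l2_add:
  assumes "in_weighted_l2 j b f" "in_weighted_l2 j b g"
  shows "in_weighted_l2 j b (\<lambda>n. f n + g n)"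
  unfolding in_weighted_l2_def
proof (rule summable_on_comparison_test)
  show "(\<lambda>n. 2 * (coord_weight j b n * (cmod (f n))\<^sup>2) + 2 * (coord_weight j b n * (cmod (g n))\<^sup>2)) summable_on UNIV"
    using assms unfolding in_weighted_l2_def by (intro summable_on_add summable_on_cmult_right)
  fix n
  have "coord_weight j b n * (cmod (f n + g n))\<^sup>2
      \<le> coord_weight j b n * (2 * (cmod (f n))\<^sup>2 + 2 * (cmod (g n))\<^sup>2)"
    by (rule mult_left_mono[OF norm_add_sq_le coord_weight_nonneg])
  then show "coord_weight j b n * (cmod (f n + g n))\<^sup>2
      \<le> 2 * (coord_weight j b n * (cmod (f n))\<^sup>2) + 2 * (coord_weight j b n * (cmod (g n))\<^sup>2)"
    by (simp add: algebra_simps)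
qed (auto intro: mult_nonneg_nonneg coord_weight_nonneg)

lemma in_weighted_l2_cmult: "in_weighted_l2 j b f \<Longrightarrow> in_weighted_l2 j b (\<lambda>n. c * f n)"
  unfolding in_weighted_l2_def
  by (drule summable_on_cmult_right[where c="(cmod c)\<^sup>2"]) (simp add: norm_mult power_mult_distrib algebra_simps)

lemma in_weighted_l2_cdiff:
  assumes "in_weighted_l2 j b f"
  shows "in_weighted_l2 j b (cdiff j f)"
proof -
  have "in_weighted_l2 j b (\<lambda>n. f (n + - axis j 1) + (- 1) * f (n + axis j 1))"
    using assms by (intro in_weighted_l2_add in_weighted_l2_cmult in_weighted_l2_shift) (auto simp: axis_def)
  then show ?thesis
    by (simp add: cdiff_eq)
qed

lemma one_plus_abs_power_le: "(1 + \<bar>x::real\<bar>) ^ (2 * m) \<le> 4 ^ m * (1 + \<bar>x\<bar> ^ (2 * m))"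
proof (cases "\<bar>x\<bar> \<le> 1")
  case True
  have "(1 + \<bar>x\<bar>) ^ (2 * m) \<le> 2 ^ (2 * m)"
    by (rule power_mono) (use True in auto)
  also have "\<dots> = 4 ^ m"
    by (simp add: power_mult)
  also have "\<dots> \<le> 4 ^ m * (1 + \<bar>x\<bar> ^ (2 * m))"
    by simp
  finally show ?thesis .
next
  case False
  have "(1 + \<bar>x\<bar>) ^ (2 * m) \<le> (2 * \<bar>x\<bar>) ^ (2 * m)"
    by (rule power_mono) (use False in auto)
  also have "\<dots> = 4 ^ m * \<bar>x\<bar> ^ (2 * m)"
    by (simp add: power_mult_distrib power_mult)
  also have "\<dots> \<le> 4 ^ m * (1 + \<bar>x\<bar> ^ (2 * m))"
    by simp
  finally show ?thesis .
qed

lemma in_weighted_l2_of_moment: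
  fixes \<psi> :: "int^'d \<Rightarrow> complex"
  assumes "in_l2 \<psi>" "moment_dens m \<psi> summable_on UNIV"
  shows "in_weighted_l2 j m \<psi>"
  unfolding in_weighted_l2_def
proof (rule summable_on_comparison_test)
  show "(\<lambda>n. 4 ^ m * ((cmod (\<psi> n))\<^sup>2 + moment_dens m \<psi> n)) summable_on UNIV"
    using assms unfolding in_l2_def by (intro summable_on_cmult_right summable_on_add)
  fix n
  have moment_le: "\<bar>real_of_int (n $ j)\<bar> ^ (2 * m) * (cmod (\<psi> n))\<^sup>2 \<le> moment_dens m \<psi> n"
    unfolding moment_dens_def
    by (rule member_le_sum[of j UNIV "\<lambda>j. \<bar>real_of_int (n $ j)\<bar> ^ (2 * m) * (cmod (\<psi> n))\<^sup>2"]) auto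
  have "coord_weight j m n * (cmod (\<psi> n))\<^sup>2
      \<le> 4 ^ m * (1 + \<bar>real_of_int (n $ j)\<bar> ^ (2 * m)) * (cmod (\<psi> n))\<^sup>2"
    unfolding coord_weight_def by (rule mult_right_mono[OF one_plus_abs_power_le]) simp
  also have "\<dots> = 4 ^ m * ((cmod (\<psi> n))\<^sup>2 + \<bar>real_of_int (n $ j)\<bar> ^ (2 * m) * (cmod (\<psi> n))\<^sup>2)"
    by (simp add: algebra_simps)
  also have "\<dots> \<le> 4 ^ m * ((cmod (\<psi> n))\<^sup>2 + moment_dens m \<psi> n)"
    using moment_le by simp
  finally show "coord_weight j m n * (cmod (\<psi> n))\<^sup>2 \<le> 4 ^ m * ((cmod (\<psi> n))\<^sup>2 + moment_dens m \<psi> n)" .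
qed (auto intro: mult_nonneg_nonneg coord_weight_nonneg)

text \<open>\<open>comm_coeff j \<psi> a k\<close> is the coefficient of \<open>(it)\<^sup>k\<close> in \<open>e^{-itA} n\<^sub>j\<^sup>a e^{itA} \<psi>\<close>; the recursion
  comes from \<open>n\<^sub>j e^{itA} = e^{itA} (n\<^sub>j + it W\<^sub>j)\<close> (\<open>coord_mult_evolZ\<close>).\<close>

fun comm_coeff :: "'d \<Rightarrow> (int^'d \<Rightarrow> complex) \<Rightarrow> nat \<Rightarrow> nat \<Rightarrow> (int^'d \<Rightarrow> complex)" where
  "comm_coeff j \<psi> 0 k = (if k = 0 then \<psi> else (\<lambda>n. 0))"
| "comm_coeff j \<psi> (Suc a) 0 = coord_mult j (comm_coeff j \<psi> a 0)"
| "comm_coeff j \<psi> (Suc a) (Suc k) = (\<lambda>n. coord_mult j (comm_coeff j \<psi> a (Suc k)) n + cdiff j (comm_coeff j \<psi> a k) n)"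

lemma comm_coeff_eq_zero: "a < k \<Longrightarrow> comm_coeff j \<psi> a k = (\<lambda>n. 0)"
proof (induction a arbitrary: k)
  case 0
  then show ?case
    by simp
next
  case (Suc a)
  then obtain k' where "k = Suc k'" "a < k'"
    by (cases k) auto
  then show ?case
    using Suc.IH[of k'] Suc.IH[of "Suc k'"] by (simp add: coord_mult_zero cdiff_zero)
qed

lemma comm_coeff_diag: "comm_coeff j \<psi> a a = (cdiff j ^^ a) \<psi>"
  by (induction a) (simp_all add: comm_coeff_eq_zero coord_mult_zero)

lemma in_weighted_l2_comm_coeff:
  "in_weighted_l2 j m \<psi> \<Longrightarrow> a \<le> m \<Longrightarrow> in_weighted_l2 j (m - a) (comm_coeff j \<psi> a k)"
proof (induction a arbitrary: k)
  case 0
  then show ?case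
    by (simp add: in_weighted_l2_def)
next
  case (Suc a)
  have IH: "in_weighted_l2 j (Suc (m - Suc a)) (comm_coeff j \<psi> a k')" for k'
    using Suc.IH[of k'] Suc.prems Suc_diff_Suc by fastforce
  show ?case
  proof (cases k)
    case 0
    then show ?thesis
      using in_weighted_l2_coord_mult[OF IH] by simp
  next
    case (Suc k')
    then show ?thesis
      using in_weighted_l2_coord_mult[OF IH] in_weighted_l2_Suc_imp[OF in_weighted_l2_cdiff[OF IH]]
      by (simp add: in_weighted_l2_add)
  qed
qed

lemma coord_power_evolZ:
  fixes \<psi> :: "int^'d \<Rightarrow> complex"
  assumes \<psi>: "in_weighted_l2 j m \<psi>" and "a \<le> m"
  shows "of_int (n $ j) ^ a * evolZ t \<psi> n
    = (\<Sum>k\<le>a. (\<i> * complex_of_real t) ^ k * evolZ t (comm_coeff j \<psi> a k) n)"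
  using \<open>a \<le> m\<close>
proof (induction a)
  case 0
  then show ?case
    by simp
next
  case (Suc a)
  define c where "c = \<i> * complex_of_real t"
  have weighted: "in_weighted_l2 j (Suc (m - Suc a)) (comm_coeff j \<psi> a k)" for k
    using in_weighted_l2_comm_coeff[OF \<psi>, of a k] Suc.prems Suc_diff_Suc by fastforce
  have l2: "in_l2 (comm_coeff j \<psi> a k)" for k
    by (rule in_weighted_l2_imp_in_l2[OF weighted])
  have l2_coord: "in_l2 (coord_mult j (comm_coeff j \<psi> a k))" for k
    by (rule in_weighted_l2_imp_in_l2[OF in_weighted_l2_coord_mult[OF weighted]])
  have l2_cdiff: "in_l2 (cdiff j (comm_coeff j \<psi> a k))" for k
    by (rule in_weighted_l2_imp_in_l2[OF in_weighted_l2_cdiff[OF weighted]])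
  have "of_int (n $ j) ^ Suc a * evolZ t \<psi> n = of_int (n $ j) * (\<Sum>k\<le>a. c ^ k * evolZ t (comm_coeff j \<psi> a k) n)"
    using Suc by (simp add: c_def)
  also have "\<dots> = (\<Sum>k\<le>a. c ^ k * coord_mult j (evolZ t (comm_coeff j \<psi> a k)) n)"
    by (simp add: coord_mult_def sum_distrib_left mult.left_commute)
  also have "\<dots> = (\<Sum>k\<le>a. c ^ k * evolZ t (coord_mult j (comm_coeff j \<psi> a k)) n)
      + (\<Sum>k\<le>a. c ^ Suc k * evolZ t (cdiff j (comm_coeff j \<psi> a k)) n)"
    by (simp add: coord_mult_evolZ[OF l2 l2_coord] c_def distrib_left sum.distrib mult_ac)
  also have "(\<Sum>k\<le>a. c ^ k * evolZ t (coord_mult j (comm_coeff j \<psi> a k)) n)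
      = (\<Sum>k\<le>Suc a. c ^ k * evolZ t (coord_mult j (comm_coeff j \<psi> a k)) n)"
    by (simp add: comm_coeff_eq_zero coord_mult_zero evolZ_zero)
  also have "\<dots> = evolZ t (coord_mult j (comm_coeff j \<psi> a 0)) n
      + (\<Sum>k\<le>a. c ^ Suc k * evolZ t (coord_mult j (comm_coeff j \<psi> a (Suc k))) n)"
    by (subst sum.atMost_Suc_shift) simp
  also have "\<dots> + (\<Sum>k\<le>a. c ^ Suc k * evolZ t (cdiff j (comm_coeff j \<psi> a k)) n)
      = evolZ t (comm_coeff j \<psi> (Suc a) 0) n + (\<Sum>k\<le>a. c ^ Suc k * evolZ t (comm_coeff j \<psi> (Suc a) (Suc k)) n)"
    by (simp add: evolZ_add[OF l2_coord l2_cdiff] distrib_left sum.distrib)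
  also have "\<dots> = (\<Sum>k\<le>Suc a. c ^ k * evolZ t (comm_coeff j \<psi> (Suc a) k) n)"
    by (subst sum.atMost_Suc_shift) simp
  finally show ?case
    by (simp add: c_def)
qed

section \<open>The difference operator\<close>

lemma axis_add: "axis j (a::'a::monoid_add) + axis j b = axis j (a + b)"
  by (simp add: axis_def vec_eq_iff)

lemma in_l2_cdiff: "in_l2 f \<Longrightarrow> in_l2 (cdiff j f)"
  unfolding cdiff_eq by (intro in_l2_diff in_l2_shift in_l2_shift_diff)

lemma in_l2_funpow_cdiff: "in_l2 f \<Longrightarrow> in_l2 ((cdiff j ^^ a) f)"
  by (induction a) (simp_all add: in_l2_cdiff)

lemma l2inner_cdiff_left:
  assumes f: "in_l2 f" and g: "in_l2 g"
  shows "l2inner (cdiff j f) g = - l2inner f (cdiff j g)"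
proof -
  have "l2inner (cdiff j f) g = cnj (l2inner g (\<lambda>n. f (n - axis j 1)) - l2inner g (\<lambda>n. f (n + axis j 1)))"
    unfolding cdiff_eq using f g
    by (subst l2inner_diff_right[symmetric]) (auto intro: in_l2_shift in_l2_shift_diff simp: cnj_l2inner)
  also have "\<dots> = l2inner f (\<lambda>n. g (n + axis j 1)) - l2inner f (\<lambda>n. g (n - axis j 1))"
    by (simp add: cnj_l2inner l2inner_shift_left l2inner_shift_left')
  also have "\<dots> = - l2inner f (cdiff j g)"
    unfolding cdiff_eq using f g by (subst l2inner_diff_right) (auto intro: in_l2_shift in_l2_shift_diff)
  finally show ?thesis .
qed

lemma l2inner_funpow_cdiff_left:
  assumes f: "in_l2 f" and g: "in_l2 g"
  shows "l2inner ((cdiff j ^^ a) f) g = (- 1) ^ a * l2inner f ((cdiff j ^^ a) g)"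
  using g
proof (induction a arbitrary: g)
  case 0
  then show ?case
    by simp
next
  case (Suc a)
  have "l2inner ((cdiff j ^^ Suc a) f) g = - l2inner ((cdiff j ^^ a) f) (cdiff j g)"
    using l2inner_cdiff_left[OF in_l2_funpow_cdiff[OF f] Suc.prems] by simp
  also have "\<dots> = - ((- 1) ^ a * l2inner f ((cdiff j ^^ a) (cdiff j g)))"
    using Suc.IH[OF in_l2_cdiff[OF Suc.prems]] by simp
  finally show ?case
    by (simp add: funpow_swap1)
qed

lemma funpow_cdiff_eq:
  "(cdiff j ^^ k) f n = (\<Sum>q\<le>k. of_nat (k choose q) * (- 1) ^ q * f (n - axis j (int k - 2 * int q)))"
proof (induction k arbitrary: n)
  case 0
  then show ?case
    by (simp add: axis_eq_0_iff[THEN iffD2])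
next
  case (Suc k)
  define g where "g q = (- 1) ^ q * f (n - axis j (int (Suc k) - 2 * int q))" for q
  have minus: "n - axis j 1 - axis j (int k - 2 * int q) = n - axis j (int (Suc k) - 2 * int q)" for q
    by (simp add: diff_diff_eq axis_add algebra_simps)
  have plus: "n + axis j 1 - axis j (int k - 2 * int q) = n - axis j (int (Suc k) - 2 * int (Suc q))" for q
    by (simp add: axis_def vec_eq_iff algebra_simps)
  have "(cdiff j ^^ Suc k) f n = (cdiff j ^^ k) f (n - axis j 1) - (cdiff j ^^ k) f (n + axis j 1)"
    by (simp add: cdiff_def)
  also have "\<dots> = (\<Sum>q\<le>k. of_nat (k choose q) * g q) - (\<Sum>q\<le>k. - (of_nat (k choose q) * g (Suc q)))"
    by (simp add: Suc.IH minus plus g_def mult.assoc)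
  also have "\<dots> = (\<Sum>q\<le>k. of_nat (k choose q) * g q) + (\<Sum>q\<le>k. of_nat (k choose q) * g (Suc q))"
    by (simp add: sum_negf)
  also have "\<dots> = (\<Sum>q\<le>Suc k. of_nat (Suc k choose q) * g q)"
    by (rule sum_atMost_Suc_binomial[symmetric])
  finally show ?case
    by (simp add: g_def mult.assoc)
qed

lemma l2norm_sq_cdiff_le:
  assumes f: "in_l2 f"
  shows "l2norm_sq (cdiff j f) \<le> 4 * l2norm_sq f"
proof -
  have "l2norm_sq (\<lambda>n. - f (n + axis j 1)) = l2norm_sq f"
    using l2norm_sq_shift[of f "axis j 1"] by (simp add: l2norm_sq_def)
  moreover have "l2norm_sq (\<lambda>n. f (n - axis j 1)) = l2norm_sq f"
    using l2norm_sq_shift[of f "- axis j 1"] by simp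
  ultimately show ?thesis
    using l2norm_sq_add_le[OF in_l2_shift_diff[OF f] in_l2_cmult[OF in_l2_shift[OF f]],
        of "axis j 1" "- 1" "axis j 1"]
    by (simp add: cdiff_eq)
qed

lemma l2norm_sq_funpow_cdiff_le:
  assumes f: "in_l2 f"
  shows "l2norm_sq ((cdiff j ^^ a) f) \<le> 4 ^ a * l2norm_sq f"
proof (induction a)
  case 0
  then show ?case
    by simp
next
  case (Suc a)
  have "l2norm_sq ((cdiff j ^^ Suc a) f) \<le> 4 * l2norm_sq ((cdiff j ^^ a) f)"
    using l2norm_sq_cdiff_le[OF in_l2_funpow_cdiff[OF f]] by simp
  also have "\<dots> \<le> 4 * (4 ^ a * l2norm_sq f)"
    using Suc by simp
  finally show ?case
    by simp
qed

text \<open>A kernel element of \<open>W\<^sub>j\<close> is \<open>2e\<^sub>j\<close>-periodic, hence constant along an infinite progression.\<close>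

lemma cdiff_eq_zero_imp:
  assumes f: "in_l2 f" and W0: "cdiff j f = (\<lambda>_. 0)"
  shows "f = (\<lambda>_. 0)"
proof (rule ccontr)
  assume "f \<noteq> (\<lambda>_. 0)"
  then obtain x where fx: "f x \<noteq> 0"
    by auto
  define p where "p k = x + axis j (2 * int k)" for k :: nat
  have periodic: "f (y + axis j 2) = f y" for y
  proof -
    have "y + axis j 1 + axis j 1 = y + axis j 2"
      by (simp add: axis_def vec_eq_iff)
    then show ?thesis
      using fun_cong[OF W0, of "y + axis j 1"] by (simp add: cdiff_def add_ac)
  qed
  have f_p: "f (p k) = f x" for k
  proof (induction k)
    case 0
    then show ?case
      by (simp add: p_def axis_eq_0_iff[THEN iffD2])
  next
    case (Suc k)
    have "p (Suc k) = p k + axis j 2"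
      by (simp add: p_def axis_def vec_eq_iff)
    then show ?case
      using Suc periodic by simp
  qed
  have "inj p"
  proof (rule injI)
    fix a b
    assume "p a = p b"
    then have "p a $ j = p b $ j"
      by simp
    then show "a = b"
      by (simp add: p_def)
  qed
  have "(\<lambda>n. (cmod (f n))\<^sup>2) summable_on range p"
    using f unfolding in_l2_def by (rule summable_on_subset) simp
  then have "((\<lambda>n. (cmod (f n))\<^sup>2) \<circ> p) summable_on UNIV"
    using summable_on_reindex[OF inj_on_subset[OF \<open>inj p\<close> subset_UNIV]] by blast
  then have "(\<lambda>_::nat. (cmod (f x))\<^sup>2) summable_on UNIV"
    by (simp add: o_def f_p)
  then show False
    using fx infsum_diverge_constant[of "UNIV :: nat set" "(cmod (f x))\<^sup>2"] by simp
qed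

lemma funpow_cdiff_neq_zero:
  assumes f: "in_l2 f" and "f \<noteq> (\<lambda>_. 0)"
  shows "(cdiff j ^^ a) f \<noteq> (\<lambda>_. 0)"
proof (induction a)
  case 0
  then show ?case
    using assms(2) by simp
next
  case (Suc a)
  then show ?case
    using cdiff_eq_zero_imp[OF in_l2_funpow_cdiff[OF f, where j=j and a=a]] by auto
qed

section \<open>The asymptotics of the moments\<close>

lemma moment_sq_eq_sum_l2norm_sq:
  assumes "\<And>j. in_l2 (\<lambda>n. of_int (n $ j) ^ m * f n)"
  shows "moment_sq m f = (\<Sum>j\<in>UNIV. l2norm_sq (\<lambda>n. of_int (n $ j) ^ m * f n))"
proof -
  have "(cmod (of_int (n $ j) ^ m * f n))\<^sup>2 = \<bar>real_of_int (n $ j)\<bar> ^ (2 * m) * (cmod (f n))\<^sup>2" for j n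
    by (simp add: norm_mult norm_power power_mult_distrib flip: power_mult[of _ m 2, unfolded mult.commute[of m]])
  then have "moment_sq m f = (\<Sum>\<^sub>\<infinity>n. \<Sum>j\<in>UNIV. (cmod (of_int (n $ j) ^ m * f n))\<^sup>2)"
    unfolding moment_sq_def moment_dens_def by simp
  also have "\<dots> = (\<Sum>j\<in>UNIV. l2norm_sq (\<lambda>n. of_int (n $ j) ^ m * f n))"
    using assms unfolding l2norm_sq_def in_l2_def by (intro infsum_finite_sum) auto
  finally show ?thesis .
qed

lemma moment_sq_evolZ_poly:
  fixes \<psi> :: "int^'d \<Rightarrow> complex"
  assumes "in_l2 \<psi>" "moment_dens m \<psi> summable_on UNIV"
  shows "complex_of_real (moment_sq m (evolZ t \<psi>))
    = (\<Sum>j\<in>UNIV. \<Sum>k\<le>m. \<Sum>l\<le>m. (- \<i>) ^ k * \<i> ^ l * l2inner (comm_coeff j \<psi> m k) (comm_coeff j \<psi> m l)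
        * complex_of_real (t ^ (k + l)))"
proof -
  have weighted: "in_weighted_l2 j m \<psi>" for j
    by (rule in_weighted_l2_of_moment[OF assms])
  have l2: "in_l2 (comm_coeff j \<psi> m k)" for j k
    using in_weighted_l2_comm_coeff[OF weighted le_refl] by (rule in_weighted_l2_imp_in_l2)
  have expand: "(\<lambda>n. of_int (n $ j) ^ m * evolZ t \<psi> n)
      = (\<lambda>n. \<Sum>k\<le>m. (\<i> * complex_of_real t) ^ k * evolZ t (comm_coeff j \<psi> m k) n)" for j
    using coord_power_evolZ[OF weighted le_refl] by simp
  have "complex_of_real (l2norm_sq (\<lambda>n. of_int (n $ j) ^ m * evolZ t \<psi> n))
      = (\<Sum>k\<le>m. \<Sum>l\<le>m. (- \<i>) ^ k * \<i> ^ l * l2inner (comm_coeff j \<psi> m k) (comm_coeff j \<psi> m l)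
          * complex_of_real (t ^ (k + l)))" for j
  proof -
    have "in_l2 (\<lambda>n. of_int (n $ j) ^ m * evolZ t \<psi> n)"
      unfolding expand by (intro in_l2_sum in_l2_cmult in_l2_evolZ l2) simp
    then have "complex_of_real (l2norm_sq (\<lambda>n. of_int (n $ j) ^ m * evolZ t \<psi> n))
        = (\<Sum>k\<le>m. \<Sum>l\<le>m. cnj ((\<i> * complex_of_real t) ^ k) * (\<i> * complex_of_real t) ^ l
            * l2inner (evolZ t (comm_coeff j \<psi> m k)) (evolZ t (comm_coeff j \<psi> m l)))"
      by (simp add: l2inner_self[symmetric] expand l2inner_sum_sum in_l2_evolZ l2)
    then show ?thesis
      by (simp add: l2inner_evolZ_evolZ l2 power_mult_distrib power_add mult_ac)
  qed
  moreover have "in_l2 (\<lambda>n. of_int (n $ j) ^ m * evolZ t \<psi> n)" for j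
    unfolding expand by (intro in_l2_sum in_l2_cmult in_l2_evolZ l2) simp
  ultimately show ?thesis
    by (simp add: moment_sq_eq_sum_l2norm_sq)
qed

lemma tendsto_moment_sq_evolZ:
  fixes \<psi> :: "int^'d \<Rightarrow> complex"
  assumes \<psi>: "in_l2 \<psi>" and moment: "moment_dens m \<psi> summable_on UNIV"
  shows "((\<lambda>t. moment_sq m (evolZ t \<psi>) / t ^ (2 * m))
    \<longlongrightarrow> (\<Sum>j\<in>UNIV. l2norm_sq ((cdiff j ^^ m) \<psi>))) at_top"
proof -
  define Q where "Q j k l = (- \<i>) ^ k * \<i> ^ l * l2inner (comm_coeff j \<psi> m k) (comm_coeff j \<psi> m l)" for j k l
  have "((\<lambda>t. \<Sum>j\<in>UNIV. \<Sum>k\<le>m. \<Sum>l\<le>m. Q j k l * complex_of_real (t ^ (k + l) / t ^ (2 * m)))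
      \<longlongrightarrow> (\<Sum>j\<in>UNIV. \<Sum>k\<le>m. \<Sum>l\<le>m. Q j k l * (if k = m \<and> l = m then 1 else 0))) at_top"
    by (intro tendsto_sum tendsto_mult tendsto_const tendsto_power_ratio_at_top) auto
  moreover have "(\<Sum>k\<le>m. \<Sum>l\<le>m. Q j k l * (if k = m \<and> l = m then 1 else 0)) = Q j m m" for j
  proof -
    have "Q j k l * (if k = m \<and> l = m then 1 else 0) = (if l = m then (if k = m then Q j k l else 0) else 0)" for k l
      by simp
    then show ?thesis
      by (simp add: sum.delta)
  qed
  moreover have "Q j m m = complex_of_real (l2norm_sq ((cdiff j ^^ m) \<psi>))" for j
    using in_l2_funpow_cdiff[OF \<psi>]
    by (simp add: Q_def comm_coeff_diag l2inner_self flip: power_mult_distrib)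
  moreover have "complex_of_real (moment_sq m (evolZ t \<psi>) / t ^ (2 * m))
      = (\<Sum>j\<in>UNIV. \<Sum>k\<le>m. \<Sum>l\<le>m. Q j k l * complex_of_real (t ^ (k + l) / t ^ (2 * m)))" for t
    by (simp add: moment_sq_evolZ_poly[OF \<psi> moment] Q_def sum_divide_distrib)
  ultimately have "((\<lambda>t. complex_of_real (moment_sq m (evolZ t \<psi>) / t ^ (2 * m)))
      \<longlongrightarrow> complex_of_real (\<Sum>j\<in>UNIV. l2norm_sq ((cdiff j ^^ m) \<psi>))) at_top"
    by simp
  then show ?thesis
    by (simp only: tendsto_of_real_iff)
qed

lemma l2norm_sq_funpow_cdiff_eq_sum:
  fixes \<psi> :: "int^'d \<Rightarrow> complex"
  assumes \<psi>: "in_l2 \<psi>"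
  shows "complex_of_real (l2norm_sq ((cdiff j ^^ m) \<psi>))
    = (\<Sum>q\<le>2*m. (- 1) ^ m * (of_nat ((2*m) choose q) * (- 1) ^ q
        * l2inner \<psi> (\<lambda>n. \<psi> (n - axis j (int (2*m) - 2 * int q)))))"
proof -
  have "complex_of_real (l2norm_sq ((cdiff j ^^ m) \<psi>)) = l2inner ((cdiff j ^^ m) \<psi>) ((cdiff j ^^ m) \<psi>)"
    by (rule l2inner_self[OF in_l2_funpow_cdiff[OF \<psi>], symmetric])
  also have "\<dots> = (- 1) ^ m * l2inner \<psi> ((cdiff j ^^ m) ((cdiff j ^^ m) \<psi>))"
    by (rule l2inner_funpow_cdiff_left[OF \<psi> in_l2_funpow_cdiff[OF \<psi>]])
  also have "(cdiff j ^^ m) ((cdiff j ^^ m) \<psi>) = (cdiff j ^^ (2*m)) \<psi>"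
    by (simp add: mult_2 funpow_add)
  also have "(cdiff j ^^ (2*m)) \<psi>
      = (\<lambda>n. \<Sum>q\<le>2*m. (of_nat ((2*m) choose q) * (- 1) ^ q) * \<psi> (n - axis j (int (2*m) - 2 * int q)))"
    by (rule ext) (simp add: funpow_cdiff_eq)
  finally show ?thesis
    using \<psi> by (subst (asm) l2inner_sum_right) (auto intro: in_l2_cmult in_l2_shift_diff
        simp: l2inner_cmult_right sum_distrib_left)
qed

lemma l2norm_sq_funpow_cdiff:
  fixes \<psi> :: "int^'d \<Rightarrow> complex"
  assumes \<psi>: "in_l2 \<psi>"
  shows "complex_of_real (l2norm_sq ((cdiff j ^^ m) \<psi>))
    = of_nat ((2*m) choose m) * complex_of_real (l2norm_sq \<psi>)
      + (\<Sum>q<m. of_nat ((2*m) choose q) * (- 1) ^ (q + m) *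
          (l2inner \<psi> (\<lambda>n. \<psi> (n - axis j (int (2*m - 2*q)))) + l2inner \<psi> (\<lambda>n. \<psi> (n + axis j (int (2*m - 2*q))))))"
proof -
  define ip where "ip z = l2inner \<psi> (\<lambda>n. \<psi> (n - axis j z))" for z :: int
  define h where "h q = (- 1) ^ m * (of_nat ((2*m) choose q) * (- 1) ^ q * ip (int (2*m) - 2 * int q))" for q
  have ip_neg: "ip (- z) = l2inner \<psi> (\<lambda>n. \<psi> (n + axis j z))" for z
  proof -
    have "(\<lambda>n. \<psi> (n - axis j (- z))) = (\<lambda>n. \<psi> (n + axis j z))"
      by (rule ext, rule arg_cong[where f=\<psi>]) (simp add: axis_def vec_eq_iff)
    then show ?thesis
      by (simp only: ip_def)
  qed
  have "complex_of_real (l2norm_sq ((cdiff j ^^ m) \<psi>)) = (\<Sum>q\<le>2*m. h q)"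
    unfolding h_def ip_def by (rule l2norm_sq_funpow_cdiff_eq_sum[OF \<psi>])
  also have "\<dots> = (\<Sum>q<m. h q) + h m + (\<Sum>q<m. h (2*m - q))"
    by (rule sum_atMost_double_split)
  also have "h m = of_nat ((2*m) choose m) * complex_of_real (l2norm_sq \<psi>)"
  proof -
    have "(- 1 :: complex) ^ m * (- 1) ^ m = 1"
      by (simp flip: power_mult_distrib)
    moreover have "ip 0 = complex_of_real (l2norm_sq \<psi>)"
      by (simp add: ip_def axis_eq_0_iff[THEN iffD2] l2inner_self[OF \<psi>])
    ultimately show ?thesis
      unfolding h_def by (simp add: mult_ac)
  qed
  also have "(\<Sum>q<m. h q) = (\<Sum>q<m. of_nat ((2*m) choose q) * (- 1) ^ (q + m) * ip (int (2*m - 2*q)))"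
    by (rule sum.cong) (auto simp: h_def power_add mult_ac of_nat_diff)
  also have "(\<Sum>q<m. h (2*m - q))
      = (\<Sum>q<m. of_nat ((2*m) choose q) * (- 1) ^ (q + m) * l2inner \<psi> (\<lambda>n. \<psi> (n + axis j (int (2*m - 2*q)))))"
  proof (rule sum.cong)
    fix q
    assume "q \<in> {..<m}"
    then have q: "q < m"
      by simp
    have "int (2*m) - 2 * int (2*m - q) = - int (2*m - 2*q)" and "(2*m) choose (2*m - q) = (2*m) choose q"
      using q by (simp_all add: binomial_symmetric[symmetric])
    moreover have "(- 1 :: complex) ^ (2*m - q) = (- 1) ^ q"
      using q by (cases "even q") (simp_all add: neg_one_even_power neg_one_odd_power even_diff_nat)
    ultimately show "h (2*m - q)
        = of_nat ((2*m) choose q) * (- 1) ^ (q + m) * l2inner \<psi> (\<lambda>n. \<psi> (n + axis j (int (2*m - 2*q))))"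
      unfolding h_def by (simp add: ip_neg power_add mult_ac)
  qed simp
  finally show ?thesis
    by (simp add: ip_def sum.distrib distrib_left add_ac)
qed

lemma l2inner_stepS:
  assumes \<psi>: "in_l2 \<psi>"
  shows "l2inner \<psi> (stepS s \<psi>)
    = (\<Sum>j\<in>UNIV. l2inner \<psi> (\<lambda>n. \<psi> (n - axis j (int s))) + l2inner \<psi> (\<lambda>n. \<psi> (n + axis j (int s))))"
proof -
  have "stepS s \<psi> = (\<lambda>n. \<Sum>j\<in>UNIV. \<psi> (n - axis j (int s)) + \<psi> (n + axis j (int s)))"
    by (rule ext) (simp add: stepS_def)
  then have "l2inner \<psi> (stepS s \<psi>)
      = (\<Sum>j\<in>UNIV. l2inner \<psi> (\<lambda>n. \<psi> (n - axis j (int s)) + \<psi> (n + axis j (int s))))"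
    using \<psi> by (simp add: l2inner_sum_right in_l2_add[OF in_l2_shift_diff in_l2_shift])
  also have "\<dots> = (\<Sum>j\<in>UNIV. l2inner \<psi> (\<lambda>n. \<psi> (n - axis j (int s))) + l2inner \<psi> (\<lambda>n. \<psi> (n + axis j (int s))))"
    using \<psi> by (intro sum.cong refl l2inner_add_right in_l2_shift_diff in_l2_shift)
  finally show ?thesis .
qed

lemma sum_l2norm_sq_funpow_cdiff:
  fixes \<psi> :: "int^'d \<Rightarrow> complex"
  assumes \<psi>: "in_l2 \<psi>"
  shows "complex_of_real (\<Sum>j\<in>UNIV. l2norm_sq ((cdiff j ^^ m) \<psi>))
    = of_nat CARD('d) * of_nat ((2*m) choose m) * complex_of_real (l2norm_sq \<psi>)
      + (\<Sum>q<m. of_nat ((2*m) choose q) * (- 1) ^ (q + m) * l2inner \<psi> (stepS (2*m - 2*q) \<psi>))"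
proof -
  define s where "s j q = l2inner \<psi> (\<lambda>n. \<psi> (n - axis j (int (2*m - 2*q))))
    + l2inner \<psi> (\<lambda>n. \<psi> (n + axis j (int (2*m - 2*q))))" for j q
  have "complex_of_real (\<Sum>j\<in>UNIV. l2norm_sq ((cdiff j ^^ m) \<psi>))
      = (\<Sum>j\<in>UNIV. of_nat ((2*m) choose m) * complex_of_real (l2norm_sq \<psi>)
          + (\<Sum>q<m. of_nat ((2*m) choose q) * (- 1) ^ (q + m) * s j q))"
    by (simp add: l2norm_sq_funpow_cdiff[OF \<psi>] s_def)
  also have "\<dots> = of_nat CARD('d) * (of_nat ((2*m) choose m) * complex_of_real (l2norm_sq \<psi>))
      + (\<Sum>q<m. of_nat ((2*m) choose q) * (- 1) ^ (q + m) * (\<Sum>j\<in>UNIV. s j q))"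
    by (simp only: sum.distrib sum_constant sum_distrib_left sum.swap[of _ UNIV "{..<m}"])
  also have "\<dots> = of_nat CARD('d) * of_nat ((2*m) choose m) * complex_of_real (l2norm_sq \<psi>)
      + (\<Sum>q<m. of_nat ((2*m) choose q) * (- 1) ^ (q + m) * l2inner \<psi> (stepS (2*m - 2*q) \<psi>))"
    by (simp add: s_def l2inner_stepS[OF \<psi>] mult.assoc)
  finally show ?thesis .
qed

lemma sum_l2norm_sq_funpow_cdiff_pos:
  fixes \<psi> :: "int^'d \<Rightarrow> complex"
  assumes "in_l2 \<psi>" "\<psi> \<noteq> (\<lambda>_. 0)"
  shows "0 < (\<Sum>j\<in>UNIV. l2norm_sq ((cdiff j ^^ m) \<psi>))"
proof -
  obtain j0 :: 'd where True
    by blast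
  show ?thesis
    by (rule sum_pos2[of UNIV j0])
       (auto intro: l2norm_sq_pos[OF in_l2_funpow_cdiff[OF assms(1)] funpow_cdiff_neq_zero[OF assms]]
         l2norm_sq_nonneg)
qed

lemma sum_l2norm_sq_funpow_cdiff_le:
  fixes \<psi> :: "int^'d \<Rightarrow> complex"
  assumes "in_l2 \<psi>"
  shows "(\<Sum>j\<in>UNIV. l2norm_sq ((cdiff j ^^ m) \<psi>)) \<le> 4 ^ m * real CARD('d) * l2norm_sq \<psi>"
  using sum_mono[of UNIV "\<lambda>j. l2norm_sq ((cdiff j ^^ m) \<psi>)" "\<lambda>_. 4 ^ m * l2norm_sq \<psi>"]
    l2norm_sq_funpow_cdiff_le[OF assms]
  by (simp add: mult_ac)

theorem theorem2p1:
  fixes \<psi> :: "int^'d \<Rightarrow> complex" and m :: nat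
  assumes "in_l2 \<psi>"
    and "moment_dens m \<psi> summable_on UNIV"
  shows "\<exists>L::real.
     ((\<lambda>t. moment_sq m (evolZ t \<psi>) / t ^ (2*m)) \<longlongrightarrow> L) at_top \<and>
     complex_of_real L =
        of_nat CARD('d) * of_nat ((2*m) choose m) * complex_of_real (l2norm_sq \<psi>)
        + (\<Sum>q<m. of_nat ((2*m) choose q) * (-1) ^ (q + m) * l2inner \<psi> (stepS (2*m - 2*q) \<psi>)) \<and>
     (\<psi> \<noteq> (\<lambda>_. 0) \<longrightarrow> L > 0) \<and>
     L \<le> 4 ^ m * real CARD('d) * l2norm_sq \<psi>"
  using tendsto_moment_sq_evolZ[OF assms] sum_l2norm_sq_funpow_cdiff[OF assms(1)]
    sum_l2norm_sq_funpow_cdiff_pos[OF assms(1)] sum_l2norm_sq_funpow_cdiff_le[OF assms(1)]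
  by blast

end
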